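(* Let $\lambda\in(\frac16,\frac56)$. For every $x\in[0,1]\setminus\mathcal E$, $$h_{F^\lambda}(x)\le1-\max\Big(\limsup_{n\to\infty}\frac{\beta_1(x,n)\log(6\lambda+1)+\beta_2(x,n)\log(6\lambda-1)}{\beta_{0,3}(x,n)\log3+\beta_{1,2}(x,n)\log6},\,0\Big),$$ with equality if $x\in\mathcal I$.
   Context: Construction: $F^\lambda_0\equiv0$ on $[0,1]$. Given $F^\lambda_n$ with its $4^n$ closed intervals of generation $n$ (covering $[0,1]$, disjoint interiors, $F^\lambda_n$ affine on each), on each interval $[a,b]$ of generation $n$, with $\ell=b-a$ and slope $m$, $F^\lambda_{n+1}$ coincides with $F^\lambda_n$ at $a,a+\ell/3,a+2\ell/3,b$, equals $F^\lambda_n(a+\ell/2)+\lambda\ell\sqrt{1+m^2}$ at $a+\ell/2$, and is affine on $[a,a+\ell/3],[a+\ell/3,a+\ell/2],[a+\ell/2,a+2\ell/3],[a+2\ell/3,b]$. $F^\lambda=\lim_nF^\lambda_n$. Pointwise exponent: $f\in\mathcal C^\alpha(x_0)$ if there exist a polynomial $P$ of degree at most $\lfloor\alpha\rfloor$ and $C,\delta>0$ with $|f(x)-P(x-x_0)|\le C|x-x_0|^\alpha$ whenever $|x-x_0|<\delta$; $h_f(x_0)=\sup\{\alpha\ge0:f\in\mathcal C^\alpha(x_0)\}$. Dynamics: $T(x)=3x$ on $[0,\frac13)$, $6x-2$ on $[\frac13,\frac12)$, $4-6x$ on $[\frac12,\frac23)$, $3x-2$ on $[\frac23,1]$; $U(x)=0,1,2,3$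 on these intervals; $u_n(x)=U(T^nx)$; $\beta_i(x,n)=\#\{k<n:u_k(x)=i\}$, $\beta_{i,j}=\beta_i+\beta_j$. $\mathcal E$ is the set of $x$ whose digit sequence is eventually constantly $0$ or eventually constantly $3$; for $x\notin\mathcal E$, $m_n(x)$ is the slope of $F^\lambda_n$ at $x$. $\mathcal I$ is the set of $x\in[0,1]\setminus\mathcal E$ with $\lim_{n\to\infty}|m_n(x)|=+\infty$. *)

theory Defs
  imports "HOL-Analysis.Analysis" "HOL-Computational_Algebra.Polynomial"
begin

text \<open>Piecewise affine approximations F_n, represented by their list of nodes
  (breakpoints with values), sorted from 0 to 1.\<close>

fun refine :: "real \<Rightarrow> (real \<times> real) list \<Rightarrow> (real \<times> real) list" where
  "refine lam ((a, ya) # (b, yb) # rest) =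
     (let l = b - a; m = (yb - ya) / l in
       [(a, ya), (a + l / 3, ya + m * l / 3),
        (a + l / 2, ya + m * l / 2 + lam * l * sqrt (1 + m\<^sup>2)),
        (a + 2 * l / 3, ya + m * (2 * l / 3))] @ refine lam ((b, yb) # rest))"
| "refine lam [p] = [p]"
| "refine lam [] = []"

primrec nodes :: "real \<Rightarrow> nat \<Rightarrow> (real \<times> real) list" where
  "nodes lam 0 = [(0, 0), (1, 0)]"
| "nodes lam (Suc n) = refine lam (nodes lam n)"

fun interp :: "(real \<times> real) list \<Rightarrow> real \<Rightarrow> real" where
  "interp ((a, ya) # (b, yb) # rest) x =
     (if x \<le> b then ya + (yb - ya) / (b - a) * (x - a) else interp ((b, yb) # rest) x)"
| "interp [(a, ya)] x = ya"
| "interp [] x = 0"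

definition Fn :: "real \<Rightarrow> nat \<Rightarrow> real \<Rightarrow> real" where
  "Fn lam n x = interp (nodes lam n) x"

definition Flam :: "real \<Rightarrow> real \<Rightarrow> real" where
  "Flam lam x = lim (\<lambda>n. Fn lam n x)"

definition Tmap :: "real \<Rightarrow> real" where
  "Tmap x = (if x < 1/3 then 3 * x else if x < 1/2 then 6 * x - 2
             else if x < 2/3 then 4 - 6 * x else 3 * x - 2)"

definition Udig :: "real \<Rightarrow> nat" where
  "Udig x = (if x < 1/3 then 0 else if x < 1/2 then 1 else if x < 2/3 then 2 else 3)"

definition digit :: "nat \<Rightarrow> real \<Rightarrow> nat" where
  "digit n x = Udig ((Tmap ^^ n) x)"

definition beta :: "nat \<Rightarrow> real \<Rightarrow> nat \<Rightarrow> nat" where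
  "beta i x n = card {k. k < n \<and> digit k x = i}"

definition Eset :: "real set" where
  "Eset = {x. \<exists>N. (\<forall>n\<ge>N. digit n x = 0) \<or> (\<forall>n\<ge>N. digit n x = 3)}"

definition slope :: "real \<Rightarrow> nat \<Rightarrow> real \<Rightarrow> real" where
  "slope lam n x = deriv (Fn lam n) x"

definition Iset :: "real \<Rightarrow> real set" where
  "Iset lam = {x \<in> {0..1} - Eset. filterlim (\<lambda>n. \<bar>slope lam n x\<bar>) at_top sequentially}"

definition pointwise_hoelder :: "(real \<Rightarrow> real) \<Rightarrow> real \<Rightarrow> real \<Rightarrow> bool" where
  "pointwise_hoelder f x0 \<alpha> \<longleftrightarrow>
     (\<exists>P :: real poly. \<exists>C \<delta>. degree P \<le> nat \<lfloor>\<alpha>\<rfloor> \<and> \<delta> > 0 \<and>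
        (\<forall>x. \<bar>x - x0\<bar> < \<delta> \<longrightarrow> \<bar>f x - poly P (x - x0)\<bar> \<le> C * \<bar>x - x0\<bar> powr \<alpha>))"

definition hoelder_exponent :: "(real \<Rightarrow> real) \<Rightarrow> real \<Rightarrow> ereal" where
  "hoelder_exponent f x0 = Sup {ereal \<alpha> | \<alpha>. \<alpha> \<ge> 0 \<and> pointwise_hoelder f x0 \<alpha>}"

definition ratio :: "real \<Rightarrow> real \<Rightarrow> nat \<Rightarrow> real" where
  "ratio lam x n =
     (real (beta 1 x n) * ln (6 * lam + 1) + real (beta 2 x n) * ln (6 * lam - 1)) /
     (real (beta 0 x n + beta 3 x n) * ln 3 + real (beta 1 x n + beta 2 x n) * ln 6)"

end

theory Submission
  imports Defs
begin

text \<open>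
  \<open>F\<^sub>n\<close> is affine on each of the \<open>4\<^sup>n\<close> intervals of generation \<open>n\<close>. On such an interval of
  length \<open>l\<close> where \<open>F\<^sub>n\<close> has slope \<open>m\<close>, the graph length \<open>l \<surd>(1 + m\<^sup>2)\<close> shrinks from one
  generation to the next by at least the factor \<open>max (1/3) ((1 + 6\<lambda>)/6) < 1\<close>. Hence \<open>F\<^sub>n\<close>
  converges, \<open>F\<close> stays within a constant times the graph length of every affine piece, and
  \<open>F\<close> agrees with \<open>F\<^sub>n\<close> at the nodes of generation \<open>n\<close>.

  Let \<open>I\<^sub>n(x)\<close> be the interval of generation \<open>n\<close> containing \<open>x\<close>, with slope \<open>m\<^sub>n\<close> and
  length \<open>l\<^sub>n\<close>; \<open>- log l\<^sub>n\<close> is the denominator of the ratio. The second difference of \<open>F\<close> at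
  its ends and midpoint is \<open>-2\<lambda> l\<^sub>n \<surd>(1 + m\<^sub>n\<^sup>2)\<close>, which a pointwise Hoelder approximation of
  order \<open>\<alpha>\<close> can only match if \<open>\<surd>(1 + m\<^sub>n\<^sup>2) = O(l\<^sub>n\<^bsup>\<alpha>-1\<^esup>)\<close>. Conversely this bound controls the
  increments of \<open>F\<close> between points first separated at generation \<open>n\<close>, so it yields
  regularity \<open>\<alpha>\<close>. Measured in the orientation of \<open>T\<^sup>n\<close>, the slope makes \<open>\<surd>(1 + m\<^sup>2) + m\<close> grow
  at least by the factor \<open>6\<lambda> + 1\<close> resp. \<open>6\<lambda> - 1\<close> at the digits 1 and 2, which gives the
  inequality; once the slopes tend to infinity these factors are also upper bounds up to
  \<open>1 + \<epsilon>\<close>, which gives equality.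
\<close>

section \<open>Cells of the construction\<close>

text \<open>A cell is an interval \<open>[a, a + l]\<close> of some generation together with the affine piece of
  \<open>F\<^sub>n\<close> on it, given by its value at \<open>a\<close> and its slope.\<close>

datatype cell = Cell (cell_left: real) (cell_len: real) (cell_val: real) (cell_slope: real)

definition left_node :: "cell \<Rightarrow> real \<times> real" where
  "left_node c = (cell_left c, cell_val c)"

definition right_node :: "cell \<Rightarrow> real \<times> real" where
  "right_node c = (cell_left c + cell_len c, cell_val c + cell_slope c * cell_len c)"

definition in_cell :: "cell \<Rightarrow> real \<Rightarrow> bool" where
  "in_cell c t \<longleftrightarrow> cell_left c \<le> t \<and> t \<le> cell_left c + cell_len c"

definition cell_aff :: "cell \<Rightarrow> real \<Rightarrow> real" where
  "cell_aff c t = cell_val c + cell_slope c * (t - cell_left c)"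

definition stretch :: "cell \<Rightarrow> real" where
  "stretch c = sqrt (1 + (cell_slope c)\<^sup>2)"

definition arclen :: "cell \<Rightarrow> real" where
  "arclen c = cell_len c * stretch c"

text \<open>The four cells of the next generation inside \<open>c\<close>; every \<open>k \<ge> 3\<close> denotes the last one.\<close>

definition subcell :: "real \<Rightarrow> nat \<Rightarrow> cell \<Rightarrow> cell" where
  "subcell lam k c = (let a = cell_left c; l = cell_len c; v = cell_val c; m = cell_slope c in
     if k = 0 then Cell a (l/3) v m
     else if k = 1 then Cell (a + l/3) (l/6) (v + m*l/3) (m + 6 * lam * sqrt (1+m\<^sup>2))
     else if k = 2 then Cell (a + l/2) (l/6) (v + m*l/2 + lam * l * sqrt (1+m\<^sup>2)) (m - 6 * lam * sqrt (1+m\<^sup>2))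
     else Cell (a + 2*l/3) (l/3) (v + m*(2*l/3)) m)"

definition subcells :: "real \<Rightarrow> cell \<Rightarrow> cell list" where
  "subcells lam c = [subcell lam 0 c, subcell lam 1 c, subcell lam 2 c, subcell lam 3 c]"

definition unit_cell :: cell where
  "unit_cell = Cell 0 1 0 0"

primrec cells :: "real \<Rightarrow> nat \<Rightarrow> cell list" where
  "cells lam 0 = [unit_cell]"
| "cells lam (Suc n) = concat (map (subcells lam) (cells lam n))"

fun contiguous :: "cell list \<Rightarrow> real \<times> real \<Rightarrow> bool" where
  "contiguous [] e = True"
| "contiguous [c] e = (cell_len c > 0 \<and> right_node c = e)"
| "contiguous (c # c' # cs) e = (cell_len c > 0 \<and> right_node c = left_node c' \<and> contiguous (c' # cs) e)"

lemma refine_contiguous: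
  assumes "contiguous cs e" "cs \<noteq> []"
  shows "refine lam (map left_node cs @ [e]) = map left_node (concat (map (subcells lam) cs)) @ [e]"
  using assms
proof (induction cs e rule: contiguous.induct)
  case (2 c e)
  then show ?case
    by (cases c) (auto simp: left_node_def right_node_def subcells_def subcell_def Let_def)
next
  case (3 c c' cs e)
  then have IH: "refine lam (map left_node (c' # cs) @ [e])
      = map left_node (concat (map (subcells lam) (c' # cs))) @ [e]"
    by auto
  obtain a l v m where c: "c = Cell a l v m" by (cases c)
  have c': "left_node c' = (a + l, v + m * l)" using 3(2) c by (simp add: right_node_def)
  have "refine lam (map left_node (c # c' # cs) @ [e])
      = refine lam ((a, v) # (a + l, v + m*l) # (map left_node cs @ [e]))"
    using c c' by (simp add: left_node_def)
  also have "\<dots> = map left_node (subcells lam c) @ refine lam (map left_node (c' # cs) @ [e])"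
    using 3(2) c c' by (simp add: Let_def left_node_def subcells_def subcell_def)
  finally show ?case using IH by simp
qed simp

lemma contiguous_subcells:
  assumes "contiguous cs e"
  shows "contiguous (concat (map (subcells lam) cs)) e"
  using assms
proof (induction cs e rule: contiguous.induct)
  case (2 c e)
  then show ?case
    by (cases c) (auto simp: left_node_def right_node_def subcells_def subcell_def Let_def field_simps)
next
  case (3 c c' cs e)
  have split: "concat (map (subcells lam) (c # c' # cs))
      = [subcell lam 0 c, subcell lam 1 c, subcell lam 2 c, subcell lam 3 c]
        @ subcell lam 0 c' # tl (concat (map (subcells lam) (c' # cs)))"
    and next_cells: "concat (map (subcells lam) (c' # cs))
      = subcell lam 0 c' # tl (concat (map (subcells lam) (c' # cs)))"
    by (simp_all add: subcells_def)
  have "contiguous (concat (map (subcells lam) (c' # cs))) e" using 3 by auto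
  then show ?case using 3(2) unfolding split
    by (subst (asm) next_cells, cases c, cases c')
       (auto simp: left_node_def right_node_def subcell_def Let_def field_simps)
qed simp

lemma contiguous_cells: "contiguous (cells lam n) (1, 0)"
  by (induction n) (auto simp: unit_cell_def right_node_def contiguous_subcells)

lemma cells_not_Nil: "cells lam n \<noteq> []"
  by (induction n) (auto simp: subcells_def)

lemma nodes_eq_cells: "nodes lam n = map left_node (cells lam n) @ [(1, 0)]"
proof (induction n)
  case (Suc n)
  then show ?case using refine_contiguous[OF contiguous_cells cells_not_Nil] by simp
qed (simp add: unit_cell_def left_node_def)

lemma contiguous_ConsD: "contiguous (c # cs) e \<Longrightarrow> contiguous cs e"
  by (cases cs) auto

lemma contiguous_len_pos: "contiguous cs e \<Longrightarrow> c \<in> set cs \<Longrightarrow> cell_len c > 0"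
  by (induction cs e rule: contiguous.induct) auto

lemma contiguous_left_ge:
  "contiguous (c # cs) e \<Longrightarrow> c' \<in> set cs \<Longrightarrow> cell_left c' \<ge> cell_left c + cell_len c"
proof (induction cs arbitrary: c)
  case (Cons c1 cs)
  have c1: "cell_left c1 = cell_left c + cell_len c" "cell_len c1 > 0"
    using Cons.prems(1) by (auto simp: right_node_def left_node_def contiguous_len_pos)
  show ?case
  proof (cases "c' = c1")
    case False
    then have "cell_left c' \<ge> cell_left c1 + cell_len c1"
      using Cons by simp
    then show ?thesis using c1 by simp
  qed (use c1 in simp)
qed simp

lemma contiguous_Cons_left_eq:
  assumes "contiguous (c # cs) e" "c' \<in> set cs" "cell_left c' \<le> cell_left c + cell_len c"
  shows "left_node c' = right_node c"
proof -
  obtain c1 cs' where cs: "cs = c1 # cs'" using assms(2) by (cases cs) auto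
  have c1: "left_node c1 = right_node c" "cell_len c1 > 0"
    using assms(1) cs by (auto simp: contiguous_len_pos)
  have "c' = c1"
  proof (rule ccontr)
    assume "c' \<noteq> c1"
    then have "cell_left c' \<ge> cell_left c1 + cell_len c1"
      using contiguous_left_ge[of c1 cs' e] contiguous_ConsD[OF assms(1)] assms(2) cs by simp
    then show False using assms(3) c1 by (simp add: left_node_def right_node_def)
  qed
  then show ?thesis using c1 by simp
qed

lemma interp_contiguous:
  assumes "contiguous cs e" "c \<in> set cs" "in_cell c t"
  shows "interp (map left_node cs @ [e]) t = cell_aff c t"
  using assms
proof (induction cs arbitrary: c)
  case (Cons c0 cs)
  obtain a l v m where c0: "c0 = Cell a l v m" by (cases c0)
  have "l > 0" using Cons.prems(1) c0 by (cases cs) auto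
  obtain rest where nodes: "map left_node cs @ [e] = (a + l, v + m * l) # rest"
    using Cons.prems(1) c0 by (cases cs) (auto simp: right_node_def left_node_def)
  have step: "interp (map left_node (c0 # cs) @ [e]) t
      = (if t \<le> a + l then cell_aff c0 t else interp (map left_node cs @ [e]) t)"
    using \<open>l > 0\<close> by (simp add: nodes c0 left_node_def cell_aff_def)
  show ?case
  proof (cases "c = c0")
    case True
    then show ?thesis using Cons.prems(3) step by (simp add: in_cell_def c0)
  next
    case False
    then have c: "c \<in> set cs" using Cons.prems(2) by simp
    have IH: "interp (map left_node cs @ [e]) t = cell_aff c t"
      using Cons.IH[OF contiguous_ConsD[OF Cons.prems(1)] c Cons.prems(3)] .
    show ?thesis
    proof (cases "t \<le> a + l")
      case True
      \<comment> \<open>then \<open>t\<close> is the node shared by \<open>c0\<close> and \<open>c\<close>, where both affine pieces agree\<close>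
      have "cell_left c \<ge> a + l" using contiguous_left_ge[OF Cons.prems(1) c] c0 by simp
      then have t: "t = a + l" "cell_left c = a + l" using True Cons.prems(3) by (auto simp: in_cell_def)
      then have "left_node c = right_node c0"
        using contiguous_Cons_left_eq[OF Cons.prems(1) c] c0 by simp
      then have "cell_val c = v + m * l" using c0 by (simp add: left_node_def right_node_def)
      then show ?thesis using step t c0 by (simp add: cell_aff_def)
    qed (use step IH in simp)
  qed
qed simp

lemma Fn_eq_cell_aff: "c \<in> set (cells lam n) \<Longrightarrow> in_cell c t \<Longrightarrow> Fn lam n t = cell_aff c t"
  unfolding Fn_def nodes_eq_cells by (rule interp_contiguous[OF contiguous_cells])

primrec descendants :: "real \<Rightarrow> nat \<Rightarrow> cell \<Rightarrow> cell set" where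
  "descendants lam 0 c = {c}"
| "descendants lam (Suc j) c = (\<Union>c'\<in>descendants lam j c. set (subcells lam c'))"

lemma set_subcells: "set (subcells lam c) = range (\<lambda>k. subcell lam k c)"
proof -
  have "subcell lam k c \<in> set (subcells lam c)" for k
    by (cases "k = 0"; cases "k = 1"; cases "k = 2") (auto simp: subcells_def subcell_def Let_def)
  then show ?thesis by (auto simp: subcells_def)
qed

lemma set_cells: "set (cells lam n) = descendants lam n unit_cell"
  by (induction n) auto

lemma subcell_in_descendants: "c \<in> descendants lam n c0 \<Longrightarrow> subcell lam k c \<in> descendants lam (Suc n) c0"
  by (auto simp: set_subcells)

lemma descendants_trans:
  "c' \<in> descendants lam j c \<Longrightarrow> c \<in> descendants lam n c0 \<Longrightarrow> c' \<in> descendants lam (n + j) c0"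
proof (induction j arbitrary: c')
  case (Suc j)
  then obtain c'' where "c'' \<in> descendants lam j c" "c' \<in> set (subcells lam c'')" by auto
  then show ?case using Suc.IH[of c''] Suc.prems(2) by auto
qed simp

lemma subcell_cover: "in_cell c t \<Longrightarrow> \<exists>k\<le>3. in_cell (subcell lam k c) t"
proof -
  assume t: "in_cell c t"
  let ?a = "cell_left c" and ?l = "cell_len c"
  consider "t \<le> ?a + ?l / 3" | "?a + ?l / 3 \<le> t" "t \<le> ?a + ?l / 2"
    | "?a + ?l / 2 \<le> t" "t \<le> ?a + 2 * ?l / 3" | "?a + 2 * ?l / 3 \<le> t"
    by linarith
  then show ?thesis
  proof cases
    case 1 then show ?thesis using t by (intro exI[of _ 0]) (simp add: subcell_def in_cell_def Let_def)
  next
    case 2 then show ?thesis using t by (intro exI[of _ 1]) (simp add: subcell_def in_cell_def Let_def)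
  next
    case 3 then show ?thesis using t by (intro exI[of _ 2]) (simp add: subcell_def in_cell_def Let_def)
  next
    case 4 then show ?thesis using t by (intro exI[of _ 3]) (simp add: subcell_def in_cell_def Let_def)
  qed
qed

lemma descendants_cover: "in_cell c t \<Longrightarrow> \<exists>c'\<in>descendants lam j c. in_cell c' t"
proof (induction j)
  case (Suc j)
  then obtain c' where "c' \<in> descendants lam j c" "in_cell c' t" by auto
  moreover obtain k where "in_cell (subcell lam k c') t" using subcell_cover[OF \<open>in_cell c' t\<close>] by blast
  ultimately show ?case by (auto simp: set_subcells)
qed simp

section \<open>Contraction of the graph length\<close>

lemma stretch_ge_1: "stretch c \<ge> 1"
  unfolding stretch_def by simp

lemma abs_slope_le_stretch: "\<bar>cell_slope c\<bar> \<le> stretch c"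
  unfolding stretch_def by (simp add: real_le_rsqrt abs_le_square_iff power2_eq_square)

lemma sqrt_one_plus_square_add_le:
  fixes m e :: real
  shows "sqrt (1 + (m + e)\<^sup>2) \<le> sqrt (1 + m\<^sup>2) + \<bar>e\<bar>"
proof -
  have "\<bar>m\<bar> \<le> sqrt (1 + m\<^sup>2)" by (simp add: real_le_rsqrt abs_le_square_iff power2_eq_square)
  then have "\<bar>m\<bar> * \<bar>e\<bar> \<le> sqrt (1 + m\<^sup>2) * \<bar>e\<bar>" by (rule mult_right_mono) simp
  moreover have "m * e \<le> \<bar>m\<bar> * \<bar>e\<bar>" by (metis abs_ge_self abs_mult)
  ultimately have "1 + (m + e)\<^sup>2 \<le> (sqrt (1 + m\<^sup>2) + \<bar>e\<bar>)\<^sup>2"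
    by (simp add: power2_eq_square algebra_simps)
  then show ?thesis by (simp add: real_le_lsqrt)
qed

lemma stretch_subcell_le:
  assumes "lam > 0"
  shows "stretch (subcell lam k c) \<le> (1 + 6 * lam) * stretch c"
proof -
  have "sqrt (1 + (cell_slope c + e)\<^sup>2) \<le> (1 + 6 * lam) * stretch c" if "\<bar>e\<bar> = 6 * lam * stretch c" for e
    using sqrt_one_plus_square_add_le[of "cell_slope c" e] that by (simp add: stretch_def algebra_simps)
  from this[of "6 * lam * stretch c"] this[of "- 6 * lam * stretch c"]
  have "sqrt (1 + (cell_slope c + 6 * lam * stretch c)\<^sup>2) \<le> (1 + 6 * lam) * stretch c"
    and "sqrt (1 + (cell_slope c - 6 * lam * stretch c)\<^sup>2) \<le> (1 + 6 * lam) * stretch c"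
    using assms stretch_ge_1[of c] by simp_all
  moreover have "stretch c \<le> (1 + 6 * lam) * stretch c" using assms stretch_ge_1[of c] by simp
  ultimately show ?thesis by (auto simp: subcell_def Let_def stretch_def)
qed

definition contraction :: "real \<Rightarrow> real" where
  "contraction lam = max (1/3) ((1 + 6 * lam) / 6)"

lemma contraction_pos: "contraction lam > 0"
  by (simp add: contraction_def)

lemma contraction_lt_1: "lam < 5/6 \<Longrightarrow> contraction lam < 1"
  by (simp add: contraction_def)

lemma subcell_len_pos: "cell_len c > 0 \<Longrightarrow> cell_len (subcell lam k c) > 0"
  by (auto simp: subcell_def Let_def)

lemma in_subcell_imp_in_cell: "cell_len c > 0 \<Longrightarrow> in_cell (subcell lam k c) t \<Longrightarrow> in_cell c t"
  by (cases "k = 0"; cases "k = 1"; cases "k = 2") (auto simp: subcell_def Let_def in_cell_def)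

lemma arclen_subcell_le:
  assumes "cell_len c > 0" "lam > 0"
  shows "arclen (subcell lam k c) \<le> contraction lam * arclen c"
proof (cases "k \<in> {1, 2}")
  case True
  have "arclen (subcell lam k c) = cell_len c / 6 * stretch (subcell lam k c)"
    using True by (auto simp: arclen_def subcell_def Let_def)
  also have "\<dots> \<le> cell_len c / 6 * ((1 + 6 * lam) * stretch c)"
    using stretch_subcell_le[OF assms(2)] assms(1) by (intro mult_left_mono) auto
  also have "\<dots> \<le> contraction lam * arclen c"
    using assms stretch_ge_1[of c] mult_right_mono[of "(1 + 6 * lam) / 6" "contraction lam" "arclen c"]
    by (simp add: contraction_def arclen_def)
  finally show ?thesis .
next
  case False
  have "arclen (subcell lam k c) = cell_len c / 3 * stretch c"
    using False by (auto simp: arclen_def subcell_def Let_def stretch_def)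
  also have "\<dots> \<le> contraction lam * arclen c"
    using assms stretch_ge_1[of c] mult_right_mono[of "1/3" "contraction lam" "arclen c"]
    by (simp add: contraction_def arclen_def)
  finally show ?thesis .
qed

lemma cell_aff_subcell_deviation:
  assumes "cell_len c > 0" "lam > 0" "in_cell (subcell lam k c) t"
  shows "\<bar>cell_aff (subcell lam k c) t - cell_aff c t\<bar> \<le> lam * arclen c"
proof -
  let ?a = "cell_left c" and ?l = "cell_len c" and ?q = "stretch c"
  have q: "sqrt (1 + (cell_slope c)\<^sup>2) = ?q" by (simp add: stretch_def)
  consider "k = 1" | "k = 2" | "k \<noteq> 1 \<and> k \<noteq> 2" by blast
  then obtain h where h: "0 \<le> h" "h \<le> ?l / 6"
    and diff: "cell_aff (subcell lam k c) t - cell_aff c t = 6 * lam * ?q * h"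
  proof cases
    case 1
    have t: "?a + ?l / 3 \<le> t" "t \<le> ?a + ?l / 3 + ?l / 6"
      using assms(3) 1 by (auto simp: subcell_def in_cell_def Let_def)
    have "cell_aff (subcell lam k c) t - cell_aff c t = 6 * lam * ?q * (t - ?a - ?l / 3)"
      using 1 by (simp add: subcell_def Let_def cell_aff_def q algebra_simps)
    from that[OF _ _ this] show ?thesis using t by simp
  next
    case 2
    have t: "?a + ?l / 2 \<le> t" "t \<le> ?a + ?l / 2 + ?l / 6"
      using assms(3) 2 by (auto simp: subcell_def in_cell_def Let_def)
    have "cell_aff (subcell lam k c) t - cell_aff c t = 6 * lam * ?q * (?a + 2 * ?l / 3 - t)"
      using 2 by (simp add: subcell_def Let_def cell_aff_def q algebra_simps)
    from that[OF _ _ this] show ?thesis using t by simp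
  next
    case 3
    then have "cell_aff (subcell lam k c) t - cell_aff c t = 6 * lam * ?q * 0"
      by (simp add: subcell_def Let_def cell_aff_def algebra_simps)
    from that[OF _ _ this] show ?thesis using assms(1) by simp
  qed
  have "6 * lam * ?q * h \<le> 6 * lam * ?q * (?l / 6)"
    using h assms(2) stretch_ge_1[of c] by (intro mult_left_mono) auto
  then show ?thesis
    using diff h assms(2) stretch_ge_1[of c] by (simp add: arclen_def)
qed

lemma descendant_nested_contracted:
  assumes "cell_len c > 0" "lam > 0" "c' \<in> descendants lam j c"
  shows "cell_len c' > 0 \<and> (\<forall>t. in_cell c' t \<longrightarrow> in_cell c t) \<and> arclen c' \<le> contraction lam ^ j * arclen c"
  using assms(3)
proof (induction j arbitrary: c')
  case (Suc j)
  then obtain c'' k where c'': "c'' \<in> descendants lam j c" "c' = subcell lam k c''"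
    by (auto simp: set_subcells)
  note IH = Suc.IH[OF c''(1)]
  have "arclen c' \<le> contraction lam * arclen c''"
    using arclen_subcell_le IH assms(2) c''(2) by blast
  also have "\<dots> \<le> contraction lam * (contraction lam ^ j * arclen c)"
    using IH contraction_pos[of lam] by (intro mult_left_mono) auto
  finally show ?case
    using IH c''(2) subcell_len_pos in_subcell_imp_in_cell by (simp add: mult.assoc)
qed (use assms in simp)

lemma cell_aff_descendant_deviation_sum:
  assumes "cell_len c > 0" "lam > 0" "c' \<in> descendants lam j c" "in_cell c' t"
  shows "\<bar>cell_aff c' t - cell_aff c t\<bar> \<le> lam * arclen c * (\<Sum>i<j. contraction lam ^ i)"
  using assms(3,4)
proof (induction j arbitrary: c')
  case (Suc j)
  then obtain c'' k where c'': "c'' \<in> descendants lam j c" "c' = subcell lam k c''"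
    by (auto simp: set_subcells)
  note props = descendant_nested_contracted[OF assms(1,2) c''(1)]
  have t: "in_cell c'' t" using in_subcell_imp_in_cell props Suc.prems(2) c''(2) by blast
  have "\<bar>cell_aff c' t - cell_aff c t\<bar> \<le> \<bar>cell_aff c' t - cell_aff c'' t\<bar> + \<bar>cell_aff c'' t - cell_aff c t\<bar>"
    by simp
  also have "\<dots> \<le> lam * arclen c'' + lam * arclen c * (\<Sum>i<j. contraction lam ^ i)"
    using cell_aff_subcell_deviation props assms(2) Suc.prems(2) c''(2) Suc.IH[OF c''(1) t]
    by (intro add_mono) auto
  also have "lam * arclen c'' \<le> lam * (contraction lam ^ j * arclen c)"
    using props assms(2) by (intro mult_left_mono) auto
  finally show ?case by (simp add: algebra_simps)
qed simp

definition deviation_const :: "real \<Rightarrow> real" where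
  "deviation_const lam = lam / (1 - contraction lam)"

lemma deviation_const_pos: "0 < lam \<Longrightarrow> lam < 5/6 \<Longrightarrow> deviation_const lam > 0"
  using contraction_lt_1 by (simp add: deviation_const_def)

lemma cell_aff_descendant_deviation:
  assumes lam: "0 < lam" "lam < 5/6" and "cell_len c > 0" "c' \<in> descendants lam j c" "in_cell c' t"
  shows "\<bar>cell_aff c' t - cell_aff c t\<bar> \<le> deviation_const lam * arclen c"
proof -
  have r: "0 < contraction lam" "contraction lam < 1" using contraction_pos contraction_lt_1[OF lam(2)] by auto
  have "(\<Sum>i<j. contraction lam ^ i) = (1 - contraction lam ^ j) / (1 - contraction lam)"
    using r by (simp add: sum_gp_strict)
  also have "\<dots> \<le> 1 / (1 - contraction lam)" using r by (intro divide_right_mono) auto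
  finally have "lam * arclen c * (\<Sum>i<j. contraction lam ^ i) \<le> lam * arclen c * (1 / (1 - contraction lam))"
    using lam assms(3) stretch_ge_1[of c] by (intro mult_left_mono) (auto simp: arclen_def)
  then show ?thesis
    using cell_aff_descendant_deviation_sum[OF assms(3) lam(1) assms(4,5)] by (simp add: deviation_const_def)
qed

lemma unit_cell_descendant:
  assumes "lam > 0" "c \<in> descendants lam n unit_cell"
  shows "cell_len c > 0" "arclen c \<le> contraction lam ^ n" "in_cell c t \<Longrightarrow> t \<in> {0..1}"
  using descendant_nested_contracted[OF _ assms] by (auto simp: unit_cell_def arclen_def stretch_def in_cell_def)

lemma Fn_near_cell_aff:
  assumes lam: "0 < lam" "lam < 5/6" and c: "c \<in> descendants lam n unit_cell" "in_cell c t"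
  shows "\<bar>Fn lam (n + j) t - cell_aff c t\<bar> \<le> deviation_const lam * arclen c"
proof -
  obtain c' where c': "c' \<in> descendants lam j c" "in_cell c' t" using descendants_cover[OF c(2)] by blast
  have "c' \<in> set (cells lam (n + j))" using descendants_trans[OF c'(1) c(1)] by (simp add: set_cells)
  then have "Fn lam (n + j) t = cell_aff c' t" using Fn_eq_cell_aff c'(2) by blast
  then show ?thesis using cell_aff_descendant_deviation[OF lam unit_cell_descendant(1)[OF lam(1) c(1)] c'] by simp
qed

lemma Fn_converges:
  assumes lam: "0 < lam" "lam < 5/6" and t: "t \<in> {0..1}"
  shows "(\<lambda>k. Fn lam k t) \<longlonglongrightarrow> Flam lam t"
proof -
  have r: "0 < contraction lam" "contraction lam < 1" using contraction_pos contraction_lt_1[OF lam(2)] by auto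
  have K: "deviation_const lam > 0" using deviation_const_pos lam by simp
  have "Cauchy (\<lambda>k. Fn lam k t)"
  proof (rule CauchyI)
    fix e :: real assume e: "e > 0"
    obtain N where N: "contraction lam ^ N < e / (2 * deviation_const lam)"
      using real_arch_pow_inv[of "e / (2 * deviation_const lam)"] e K r by auto
    have "in_cell unit_cell t" using t by (simp add: in_cell_def unit_cell_def)
    then obtain c where c: "c \<in> descendants lam N unit_cell" "in_cell c t" using descendants_cover by blast
    have "\<bar>Fn lam k t - cell_aff c t\<bar> < e / 2" if "k \<ge> N" for k
    proof -
      have "\<bar>Fn lam (N + (k - N)) t - cell_aff c t\<bar> \<le> deviation_const lam * arclen c"
        by (rule Fn_near_cell_aff[OF lam c])
      also have "\<dots> \<le> deviation_const lam * contraction lam ^ N"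
        using unit_cell_descendant(2)[OF lam(1) c(1)] K by (intro mult_left_mono) auto
      also have "\<dots> < e / 2" using N K by (simp add: field_simps)
      finally show ?thesis using that by simp
    qed
    then have "\<bar>Fn lam m t - Fn lam n t\<bar> < e" if "m \<ge> N" "n \<ge> N" for m n
      using that by (smt (verit) field_sum_of_halves)
    then show "\<exists>M. \<forall>m\<ge>M. \<forall>n\<ge>M. norm (Fn lam m t - Fn lam n t) < e" by auto
  qed
  then show ?thesis
    unfolding Flam_def using Cauchy_convergent_iff convergent_LIMSEQ_iff by blast
qed

lemma Flam_near_cell_aff:
  assumes lam: "0 < lam" "lam < 5/6" and c: "c \<in> descendants lam n unit_cell" "in_cell c t"
  shows "\<bar>Flam lam t - cell_aff c t\<bar> \<le> deviation_const lam * arclen c"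
proof -
  have "(\<lambda>j. Fn lam (j + n) t) \<longlonglongrightarrow> Flam lam t"
    using Fn_converges[OF lam unit_cell_descendant(3)[OF lam(1) c]] LIMSEQ_ignore_initial_segment by blast
  then have "(\<lambda>j. \<bar>Fn lam (j + n) t - cell_aff c t\<bar>) \<longlonglongrightarrow> \<bar>Flam lam t - cell_aff c t\<bar>"
    by (intro tendsto_intros)
  then show ?thesis
    by (rule LIMSEQ_le_const2) (use Fn_near_cell_aff[OF lam c] in \<open>auto simp: add.commute\<close>)
qed

section \<open>Behaviour of the limit near the ends of a cell\<close>

lemma subcell0_iterate:
  "(subcell lam 0 ^^ r) c = Cell (cell_left c) (cell_len c / 3^r) (cell_val c) (cell_slope c)"
  by (induction r) (auto simp: subcell_def Let_def)

lemma subcell3_iterate: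
  "(subcell lam 3 ^^ r) c = Cell (cell_left c + cell_len c - cell_len c / 3^r) (cell_len c / 3^r)
     (cell_val c + cell_slope c * (cell_len c - cell_len c / 3^r)) (cell_slope c)"
  by (induction r) (auto simp: subcell_def Let_def field_simps)

lemma subcell_iterate_in_descendants:
  "c \<in> descendants lam n c0 \<Longrightarrow> (subcell lam k ^^ r) c \<in> descendants lam (n + r) c0"
  by (induction r) (auto simp: set_subcells)

lemma bounded_at_triadic_scales:
  fixes G :: "real \<Rightarrow> real"
  assumes "l > 0" "K \<ge> 0" and G: "\<And>r u. 0 \<le> u \<Longrightarrow> u \<le> l / 3^r \<Longrightarrow> \<bar>G u\<bar> \<le> K * (l / 3^r)"
  shows "G 0 = 0" and "0 \<le> u \<Longrightarrow> u \<le> l \<Longrightarrow> \<bar>G u\<bar> \<le> 3 * K * u"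
proof -
  have scales: "(\<lambda>r. l / 3^r) \<longlonglongrightarrow> 0" by (rule LIMSEQ_divide_realpow_zero) simp
  have "\<bar>G 0\<bar> \<le> 0"
    using tendsto_mult_right_zero[OF scales, of K] by (rule LIMSEQ_le_const) (use G assms(1) in auto)
  then show "G 0 = 0" by simp
  assume u: "0 \<le> u" "u \<le> l"
  show "\<bar>G u\<bar> \<le> 3 * K * u"
  proof (cases "u = 0")
    case False
    then have "eventually (\<lambda>r. l / 3^r < u) sequentially"
      using scales u by (intro order_tendstoD) auto
    then have "\<exists>r. \<not> u \<le> l / 3^r" by (auto simp: eventually_sequentially not_le)
    then obtain r where r: "u \<le> l / 3^r" "\<not> u \<le> l / 3^Suc r"
      using exists_least_lemma[of "\<lambda>r. \<not> u \<le> l / 3^r"] u by auto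
    have "\<bar>G u\<bar> \<le> K * (3 * (l / 3^Suc r))" using G[OF u(1) r(1)] by simp
    also have "\<dots> \<le> K * (3 * u)" using r(2) assms(2) by (intro mult_left_mono) auto
    finally show ?thesis by simp
  qed (use \<open>G 0 = 0\<close> in simp)
qed

lemma Flam_left_end:
  assumes lam: "0 < lam" "lam < 5/6" and c: "c \<in> descendants lam n unit_cell"
  shows "Flam lam (cell_left c) = cell_val c"
    and "in_cell c t \<Longrightarrow>
      \<bar>Flam lam t - cell_val c\<bar> \<le> (1 + 3 * deviation_const lam) * stretch c * (t - cell_left c)"
proof -
  let ?a = "cell_left c" and ?l = "cell_len c" and ?v = "cell_val c" and ?m = "cell_slope c"
  define G where "G u = Flam lam (?a + u) - (?v + ?m * u)" for u
  have G: "\<bar>G u\<bar> \<le> (deviation_const lam * stretch c) * (?l / 3^r)" if "0 \<le> u" "u \<le> ?l / 3^r" for r u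
    using Flam_near_cell_aff[OF lam subcell_iterate_in_descendants[OF c, where k=0 and r=r], of "?a + u"] that
    by (simp add: subcell0_iterate in_cell_def cell_aff_def arclen_def stretch_def G_def mult_ac)
  have "deviation_const lam * stretch c \<ge> 0"
    using deviation_const_pos[OF lam] stretch_ge_1[of c] by simp
  then have scales: "G 0 = 0" "\<And>u. 0 \<le> u \<Longrightarrow> u \<le> ?l \<Longrightarrow> \<bar>G u\<bar> \<le> 3 * (deviation_const lam * stretch c) * u"
    using bounded_at_triadic_scales[OF unit_cell_descendant(1)[OF lam(1) c], of "deviation_const lam * stretch c" G] G
    by blast+
  show "Flam lam ?a = ?v" using scales(1) by (simp add: G_def)
  assume "in_cell c t"
  then have u: "0 \<le> t - ?a" "t - ?a \<le> ?l" by (auto simp: in_cell_def)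
  have "\<bar>Flam lam t - ?v\<bar> \<le> \<bar>G (t - ?a)\<bar> + \<bar>?m * (t - ?a)\<bar>"
    using abs_triangle_ineq[of "G (t - ?a)" "?m * (t - ?a)"] by (simp add: G_def)
  also have "\<dots> \<le> 3 * (deviation_const lam * stretch c) * (t - ?a) + stretch c * (t - ?a)"
    using scales(2)[OF u] abs_slope_le_stretch[of c] u
    by (intro add_mono) (auto simp: abs_mult intro: mult_right_mono)
  finally show "\<bar>Flam lam t - ?v\<bar> \<le> (1 + 3 * deviation_const lam) * stretch c * (t - ?a)"
    by (simp add: algebra_simps)
qed

lemma Flam_right_end:
  assumes lam: "0 < lam" "lam < 5/6" and c: "c \<in> descendants lam n unit_cell"
  shows "Flam lam (cell_left c + cell_len c) = cell_val c + cell_slope c * cell_len c"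
    and "in_cell c t \<Longrightarrow> \<bar>Flam lam t - (cell_val c + cell_slope c * cell_len c)\<bar>
      \<le> (1 + 3 * deviation_const lam) * stretch c * (cell_left c + cell_len c - t)"
proof -
  let ?b = "cell_left c + cell_len c" and ?l = "cell_len c" and ?w = "cell_val c + cell_slope c * cell_len c"
    and ?m = "cell_slope c"
  define G where "G u = Flam lam (?b - u) - (?w - ?m * u)" for u
  have G: "\<bar>G u\<bar> \<le> (deviation_const lam * stretch c) * (?l / 3^r)" if "0 \<le> u" "u \<le> ?l / 3^r" for r u
    using Flam_near_cell_aff[OF lam subcell_iterate_in_descendants[OF c, where k=3 and r=r], of "?b - u"] that
    by (simp add: subcell3_iterate in_cell_def cell_aff_def arclen_def stretch_def G_def algebra_simps)
  have "deviation_const lam * stretch c \<ge> 0"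
    using deviation_const_pos[OF lam] stretch_ge_1[of c] by simp
  then have scales: "G 0 = 0" "\<And>u. 0 \<le> u \<Longrightarrow> u \<le> ?l \<Longrightarrow> \<bar>G u\<bar> \<le> 3 * (deviation_const lam * stretch c) * u"
    using bounded_at_triadic_scales[OF unit_cell_descendant(1)[OF lam(1) c], of "deviation_const lam * stretch c" G] G
    by blast+
  show "Flam lam ?b = ?w" using scales(1) by (simp add: G_def)
  assume "in_cell c t"
  then have u: "0 \<le> ?b - t" "?b - t \<le> ?l" by (auto simp: in_cell_def)
  have "\<bar>Flam lam t - ?w\<bar> \<le> \<bar>G (?b - t)\<bar> + \<bar>?m * (?b - t)\<bar>"
    using abs_triangle_ineq[of "G (?b - t)" "- ?m * (?b - t)"] by (simp add: G_def)
  also have "\<dots> \<le> 3 * (deviation_const lam * stretch c) * (?b - t) + stretch c * (?b - t)"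
    using scales(2)[OF u] abs_slope_le_stretch[of c] u
    by (intro add_mono) (auto simp: abs_mult intro: mult_right_mono)
  finally show "\<bar>Flam lam t - ?w\<bar> \<le> (1 + 3 * deviation_const lam) * stretch c * (?b - t)"
    by (simp add: algebra_simps)
qed

section \<open>Increments of the limit across subcells\<close>

lemma subcells_ordered:
  assumes "i < j" "j \<le> 3" "cell_len c > 0"
  shows "cell_left (subcell lam i c) + cell_len (subcell lam i c) \<le> cell_left (subcell lam j c)"
    and "cell_left (subcell lam i c) + cell_len (subcell lam i c) = cell_left (subcell lam j c) \<or>
      cell_len c / 6 \<le> cell_left (subcell lam j c) - (cell_left (subcell lam i c) + cell_len (subcell lam i c))"
proof -
  have "(i = 0 \<and> j = 1) \<or> (i = 0 \<and> j = 2) \<or> (i = 0 \<and> j = 3) \<or> (i = 1 \<and> j = 2) \<or> (i = 1 \<and> j = 3) \<or> (i = 2 \<and> j = 3)"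
    using assms by linarith
  then show "cell_left (subcell lam i c) + cell_len (subcell lam i c) \<le> cell_left (subcell lam j c)"
    and "cell_left (subcell lam i c) + cell_len (subcell lam i c) = cell_left (subcell lam j c) \<or>
      cell_len c / 6 \<le> cell_left (subcell lam j c) - (cell_left (subcell lam i c) + cell_len (subcell lam i c))"
    using assms by (elim disjE; simp add: subcell_def Let_def)+
qed

lemma Flam_increment_in_subcell:
  assumes lam: "0 < lam" "lam < 5/6" and c: "c \<in> descendants lam n unit_cell"
    and u: "in_cell (subcell lam k c) u"
  shows "\<bar>Flam lam u - Flam lam (cell_left (subcell lam k c))\<bar>
      \<le> (1 + 3 * deviation_const lam) * (1 + 6 * lam) * stretch c * (u - cell_left (subcell lam k c))"
    and "\<bar>Flam lam u - Flam lam (cell_left (subcell lam k c) + cell_len (subcell lam k c))\<bar>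
      \<le> (1 + 3 * deviation_const lam) * (1 + 6 * lam) * stretch c
         * (cell_left (subcell lam k c) + cell_len (subcell lam k c) - u)"
proof -
  let ?c = "subcell lam k c"
  have c': "?c \<in> descendants lam (Suc n) unit_cell" using subcell_in_descendants[OF c] .
  have A: "0 \<le> 1 + 3 * deviation_const lam" using deviation_const_pos[OF lam] by simp
  have "(1 + 3 * deviation_const lam) * stretch ?c \<le> (1 + 3 * deviation_const lam) * ((1 + 6 * lam) * stretch c)"
    using stretch_subcell_le[OF lam(1)] A by (rule mult_left_mono)
  from mult_right_mono[OF this]
  have q: "(1 + 3 * deviation_const lam) * stretch ?c * d \<le> (1 + 3 * deviation_const lam) * (1 + 6 * lam) * stretch c * d"
    if "d \<ge> 0" for d
    using that by (simp add: mult_ac)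
  show "\<bar>Flam lam u - Flam lam (cell_left ?c)\<bar>
      \<le> (1 + 3 * deviation_const lam) * (1 + 6 * lam) * stretch c * (u - cell_left ?c)"
    using order.trans[OF Flam_left_end(2)[OF lam c' u] q] Flam_left_end(1)[OF lam c'] u
    by (simp add: in_cell_def)
  show "\<bar>Flam lam u - Flam lam (cell_left ?c + cell_len ?c)\<bar>
      \<le> (1 + 3 * deviation_const lam) * (1 + 6 * lam) * stretch c * (cell_left ?c + cell_len ?c - u)"
    using order.trans[OF Flam_right_end(2)[OF lam c' u] q] Flam_right_end(1)[OF lam c'] u
    by (simp add: in_cell_def abs_minus_commute)
qed

lemma Flam_increment_across_gap:
  assumes lam: "0 < lam" "lam < 5/6" and c: "c \<in> descendants lam n unit_cell"
    and e: "in_cell c e" and g: "in_cell c g" and gap: "cell_len c / 6 \<le> g - e"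
  shows "\<bar>Flam lam g - Flam lam e\<bar> \<le> (1 + 12 * deviation_const lam) * stretch c * (g - e)"
proof -
  have K: "deviation_const lam > 0" using deviation_const_pos lam by simp
  have "cell_aff c g - cell_aff c e = cell_slope c * (g - e)" by (simp add: cell_aff_def algebra_simps)
  then have "\<bar>cell_aff c g - cell_aff c e\<bar> = \<bar>cell_slope c\<bar> * (g - e)"
    using gap unit_cell_descendant(1)[OF lam(1) c] by (simp add: abs_mult)
  also have "\<dots> \<le> stretch c * (g - e)"
    using abs_slope_le_stretch[of c] gap unit_cell_descendant(1)[OF lam(1) c] by (intro mult_right_mono) auto
  finally have aff: "\<bar>cell_aff c g - cell_aff c e\<bar> \<le> stretch c * (g - e)" .
  have "deviation_const lam * arclen c \<le> deviation_const lam * (stretch c * (6 * (g - e)))"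
    using gap K stretch_ge_1[of c] by (intro mult_left_mono) (auto simp: arclen_def)
  then show ?thesis
    using Flam_near_cell_aff[OF lam c e] Flam_near_cell_aff[OF lam c g] aff
    by (simp add: algebra_simps)
qed

definition increment_const :: "real \<Rightarrow> real" where
  "increment_const lam = (1 + 3 * deviation_const lam) * (1 + 6 * lam) + 1 + 12 * deviation_const lam"

lemma increment_const_pos: "0 < lam \<Longrightarrow> lam < 5/6 \<Longrightarrow> increment_const lam > 0"
  using deviation_const_pos[of lam] by (simp add: increment_const_def add_pos_pos)

lemma Flam_increment_subcells:
  assumes lam: "0 < lam" "lam < 5/6" and c: "c \<in> descendants lam n unit_cell"
    and ij: "i < j" "j \<le> 3" and u: "in_cell (subcell lam i c) u" and v: "in_cell (subcell lam j c) v"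
  shows "\<bar>Flam lam v - Flam lam u\<bar> \<le> increment_const lam * stretch c * (v - u)"
proof -
  let ?ci = "subcell lam i c" and ?cj = "subcell lam j c" and ?C = "increment_const lam * stretch c"
  let ?e = "cell_left ?ci + cell_len ?ci" and ?g = "cell_left ?cj"
  have K: "deviation_const lam > 0" using deviation_const_pos lam by simp
  have l: "cell_len c > 0" using unit_cell_descendant(1)[OF lam(1) c] .
  have order: "u \<le> ?e" "?e \<le> ?g" "?g \<le> v"
    using subcells_ordered(1)[OF ij l] u v by (auto simp: in_cell_def)
  have C: "(1 + 3 * deviation_const lam) * (1 + 6 * lam) * stretch c \<le> ?C"
    "(1 + 12 * deviation_const lam) * stretch c \<le> ?C"
    using K lam stretch_ge_1[of c] by (auto simp: increment_const_def intro!: mult_right_mono)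
  have left: "\<bar>Flam lam ?e - Flam lam u\<bar> \<le> ?C * (?e - u)"
    using Flam_increment_in_subcell(2)[OF lam c u] mult_right_mono[OF C(1), of "?e - u"] order by simp
  have right: "\<bar>Flam lam v - Flam lam ?g\<bar> \<le> ?C * (v - ?g)"
    using Flam_increment_in_subcell(1)[OF lam c v] mult_right_mono[OF C(1), of "v - ?g"] order by simp
  have middle: "\<bar>Flam lam ?g - Flam lam ?e\<bar> \<le> ?C * (?g - ?e)"
  proof (cases "?e = ?g")
    case False
    then have "cell_len c / 6 \<le> ?g - ?e" using subcells_ordered(2)[OF ij l] by auto
    moreover have "in_cell ?ci ?e" "in_cell ?cj ?g"
      using subcell_len_pos[OF l] by (auto simp: in_cell_def less_imp_le)
    then have "in_cell c ?e" "in_cell c ?g"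
      using in_subcell_imp_in_cell[OF l] by blast+
    ultimately show ?thesis
      using Flam_increment_across_gap[OF lam c] mult_right_mono[OF C(2), of "?g - ?e"] order
      by fastforce
  qed simp
  show ?thesis using left middle right by (simp add: algebra_simps)
qed

section \<open>The cells containing a point\<close>

text \<open>The generation-\<open>n\<close> cell containing \<open>x\<close>, read off the digits of \<open>x\<close>. The flag records
  whether \<open>T\<^sup>n\<close> maps this cell onto \<open>[0,1]\<close> increasingly: the branch of digit 2 reverses the
  orientation, so in reversed cells digit \<open>d\<close> selects subcell \<open>3 - d\<close>.\<close>

primrec coding_path :: "real \<Rightarrow> real \<Rightarrow> nat \<Rightarrow> cell \<times> bool" where
  "coding_path lam x 0 = (unit_cell, True)"
| "coding_path lam x (Suc n) = (let c = fst (coding_path lam x n); ori = snd (coding_path lam x n); d = digit n x in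
     (subcell lam (if ori then d else 3 - d) c, if d = 2 then \<not> ori else ori))"

definition path_cell :: "real \<Rightarrow> real \<Rightarrow> nat \<Rightarrow> cell" where
  "path_cell lam x n = fst (coding_path lam x n)"

definition path_orient :: "real \<Rightarrow> real \<Rightarrow> nat \<Rightarrow> bool" where
  "path_orient lam x n = snd (coding_path lam x n)"

lemma cell_len_path_cell_pos: "cell_len (path_cell lam x n) > 0"
  by (induction n) (auto simp: path_cell_def unit_cell_def subcell_def Let_def)

lemma path_cell_Suc:
  "path_cell lam x (Suc n) = subcell lam (if path_orient lam x n then digit n x else 3 - digit n x) (path_cell lam x n)"
  by (simp add: path_cell_def path_orient_def Let_def)

lemma path_orient_Suc:
  "path_orient lam x (Suc n) = (if digit n x = 2 then \<not> path_orient lam x n else path_orient lam x n)"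
  by (simp add: path_orient_def Let_def)

definition rel_pos :: "cell \<Rightarrow> bool \<Rightarrow> real \<Rightarrow> real" where
  "rel_pos c ori x = (if ori then (x - cell_left c) / cell_len c else (cell_left c + cell_len c - x) / cell_len c)"

lemma rel_pos_range: "cell_len c > 0 \<Longrightarrow> in_cell c x \<Longrightarrow> rel_pos c ori x \<in> {0..1}"
  by (auto simp: rel_pos_def in_cell_def divide_simps)

lemma subcell_of_digit:
  assumes "cell_len c > 0" "in_cell c x"
  shows "in_cell (subcell lam (if ori then Udig (rel_pos c ori x) else 3 - Udig (rel_pos c ori x)) c) x \<and>
    Tmap (rel_pos c ori x) = rel_pos (subcell lam (if ori then Udig (rel_pos c ori x) else 3 - Udig (rel_pos c ori x)) c)
      (if Udig (rel_pos c ori x) = 2 then \<not> ori else ori) x"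
proof -
  obtain a l v m where c: "c = Cell a l v m" by (cases c)
  define y where "y = rel_pos c ori x"
  have y: "0 \<le> y" "y \<le> 1" using rel_pos_range[OF assms] y_def by auto
  have l: "l > 0" using assms c by simp
  show ?thesis
  proof (cases ori)
    case True
    then have x: "x = a + y * l" using y_def l c by (simp add: rel_pos_def field_simps)
    show ?thesis
      unfolding y_def[symmetric] using True y l
      by (auto simp: x c Udig_def Tmap_def subcell_def Let_def rel_pos_def in_cell_def field_simps)
  next
    case False
    then have x: "x = a + l - y * l" using y_def l c by (simp add: rel_pos_def field_simps)
    show ?thesis
      unfolding y_def[symmetric] using False y l
      by (auto simp: x c Udig_def Tmap_def subcell_def Let_def rel_pos_def in_cell_def field_simps)
  qed
qed

lemma path_cell_props:
  assumes "x \<in> {0..1}" "lam > 0"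
  shows "path_cell lam x n \<in> descendants lam n unit_cell \<and> in_cell (path_cell lam x n) x
    \<and> (Tmap ^^ n) x = rel_pos (path_cell lam x n) (path_orient lam x n) x"
proof (induction n)
  case 0
  then show ?case using assms by (simp add: path_cell_def path_orient_def unit_cell_def in_cell_def rel_pos_def)
next
  case (Suc n)
  let ?c = "path_cell lam x n" and ?o = "path_orient lam x n"
  have l: "cell_len ?c > 0" using unit_cell_descendant(1)[OF assms(2)] Suc by blast
  have "digit n x = Udig (rel_pos ?c ?o x)" using Suc by (simp add: digit_def)
  then have cell: "path_cell lam x (Suc n)
      = subcell lam (if ?o then Udig (rel_pos ?c ?o x) else 3 - Udig (rel_pos ?c ?o x)) ?c"
    and orient: "path_orient lam x (Suc n) = (if Udig (rel_pos ?c ?o x) = 2 then \<not> ?o else ?o)"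
    by (simp_all add: path_cell_Suc path_orient_Suc)
  have iterate: "(Tmap ^^ Suc n) x = Tmap (rel_pos ?c ?o x)" using Suc by simp
  show ?case unfolding cell orient iterate
    using subcell_of_digit[OF l, of x lam ?o] subcell_in_descendants[of ?c lam n unit_cell] Suc by blast
qed

lemma Tmap_iterate_0: "(Tmap ^^ k) 0 = 0"
  by (induction k) (auto simp: Tmap_def)

lemma Tmap_iterate_1: "(Tmap ^^ k) 1 = 1"
  by (induction k) (auto simp: Tmap_def)

lemma Tmap_iterate_interior:
  assumes "x \<notin> Eset" "(Tmap ^^ n) x \<in> {0..1}"
  shows "(Tmap ^^ n) x \<in> {0<..<1}"
proof (rule ccontr)
  assume "(Tmap ^^ n) x \<notin> {0<..<1}"
  then have end_point: "(Tmap ^^ n) x = 0 \<or> (Tmap ^^ n) x = 1" using assms(2) by auto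
  have "(Tmap ^^ k) x = (Tmap ^^ (k - n)) ((Tmap ^^ n) x)" if "k \<ge> n" for k
    using that by (metis funpow_add le_add_diff_inverse2 o_apply)
  then have "(\<forall>k\<ge>n. (Tmap ^^ k) x = 0) \<or> (\<forall>k\<ge>n. (Tmap ^^ k) x = 1)"
    using end_point Tmap_iterate_0 Tmap_iterate_1 by metis
  then have "(\<forall>k\<ge>n. digit k x = 0) \<or> (\<forall>k\<ge>n. digit k x = 3)"
    by (auto simp: digit_def Udig_def)
  then show False using assms(1) unfolding Eset_def by blast
qed

lemma path_cell_interior:
  assumes "x \<in> {0..1}" "x \<notin> Eset" "lam > 0"
  shows "x \<in> {cell_left (path_cell lam x n) <..< cell_left (path_cell lam x n) + cell_len (path_cell lam x n)}"
proof -
  let ?c = "path_cell lam x n" and ?o = "path_orient lam x n"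
  note props = path_cell_props[OF assms(1,3), of n]
  have l: "cell_len ?c > 0" using unit_cell_descendant(1)[OF assms(3)] props by blast
  have "rel_pos ?c ?o x \<in> {0<..<1}"
    using Tmap_iterate_interior[OF assms(2), of n] rel_pos_range[OF l, of x ?o] props by simp
  then show ?thesis using l by (cases ?o) (auto simp: rel_pos_def divide_simps)
qed

lemma slope_eq_path_cell:
  assumes "x \<in> {0..1}" "x \<notin> Eset" "lam > 0"
  shows "slope lam n x = cell_slope (path_cell lam x n)"
proof -
  let ?c = "path_cell lam x n"
  have "Fn lam n t = cell_aff ?c t" if "t \<in> {cell_left ?c <..< cell_left ?c + cell_len ?c}" for t
    using Fn_eq_cell_aff[of ?c lam n t] path_cell_props[OF assms(1,3), of n] that
    by (simp add: set_cells in_cell_def)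
  moreover have "(cell_aff ?c has_field_derivative cell_slope ?c) (at x)"
    unfolding cell_aff_def by (auto intro!: derivative_eq_intros)
  ultimately have "(Fn lam n has_field_derivative cell_slope ?c) (at x)"
    using has_field_derivative_transform_within_open[OF _ open_greaterThanLessThan path_cell_interior[OF assms]]
    by metis
  then show ?thesis unfolding slope_def by (rule DERIV_imp_deriv)
qed

section \<open>Growth of the slopes along the path\<close>

text \<open>The slope of the path cell measured in the orientation of \<open>T\<^sup>n\<close>; it obeys a recursion
  that depends only on the digits.\<close>

definition path_slope :: "real \<Rightarrow> real \<Rightarrow> nat \<Rightarrow> real" where
  "path_slope lam x n = (if path_orient lam x n then cell_slope (path_cell lam x n) else - cell_slope (path_cell lam x n))"

definition ratio_num :: "real \<Rightarrow> real \<Rightarrow> nat \<Rightarrow> real" where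
  "ratio_num lam x n = real (beta 1 x n) * ln (6 * lam + 1) + real (beta 2 x n) * ln (6 * lam - 1)"

definition ratio_den :: "real \<Rightarrow> nat \<Rightarrow> real" where
  "ratio_den x n = real (beta 0 x n + beta 3 x n) * ln 3 + real (beta 1 x n + beta 2 x n) * ln 6"

definition digit_growth :: "real \<Rightarrow> nat \<Rightarrow> real" where
  "digit_growth lam d = (if d = 1 then ln (6 * lam + 1) else if d = 2 then ln (6 * lam - 1) else 0)"

lemma ratio_eq: "ratio lam x n = ratio_num lam x n / ratio_den x n"
  by (simp add: ratio_def ratio_num_def ratio_den_def)

lemma digit_cases: "digit n x \<in> {0, 1, 2, 3}"
  by (simp add: digit_def Udig_def)

lemma beta_Suc: "beta i x (Suc n) = beta i x n + (if digit n x = i then 1 else 0)"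
proof -
  have "{k. k < Suc n \<and> digit k x = i} = {k. k < n \<and> digit k x = i} \<union> (if digit n x = i then {n} else {})"
    by (auto simp: less_Suc_eq)
  then show ?thesis by (simp add: beta_def)
qed

lemma ratio_num_Suc: "ratio_num lam x (Suc n) = ratio_num lam x n + digit_growth lam (digit n x)"
  using digit_cases[of n x] by (auto simp: ratio_num_def digit_growth_def beta_Suc algebra_simps)

lemma ratio_den_Suc: "ratio_den x (Suc n) = ratio_den x n + (if digit n x \<in> {0, 3} then ln 3 else ln 6)"
  using digit_cases[of n x] by (auto simp: ratio_den_def beta_Suc algebra_simps)

lemma ratio_den_ge: "ratio_den x n \<ge> real n * ln 3"
proof (induction n)
  case (Suc n)
  have "ln 3 \<le> (ln 6 :: real)" by simp
  then have "ratio_den x (Suc n) \<ge> ratio_den x n + ln 3" by (simp add: ratio_den_Suc)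
  then show ?case using Suc by (simp add: algebra_simps)
qed (simp add: ratio_den_def beta_def)

lemma ratio_den_pos: "n > 0 \<Longrightarrow> ratio_den x n > 0"
proof -
  assume "n > 0"
  then have "real n * ln 3 > 0" by simp
  then show ?thesis using ratio_den_ge[of n x] by linarith
qed

lemma cell_len_path_cell: "cell_len (path_cell lam x n) = exp (- ratio_den x n)"
proof (induction n)
  case (Suc n)
  have "cell_len (path_cell lam x (Suc n)) = cell_len (path_cell lam x n) / (if digit n x \<in> {0, 3} then 3 else 6)"
    using digit_cases[of n x] by (auto simp: path_cell_Suc subcell_def Let_def)
  then show ?case using Suc by (simp add: ratio_den_Suc exp_diff)
qed (simp add: path_cell_def unit_cell_def ratio_den_def beta_def)

lemma stretch_path_cell: "stretch (path_cell lam x n) = sqrt (1 + (path_slope lam x n)\<^sup>2)"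
  by (simp add: stretch_def path_slope_def)

lemma path_slope_Suc:
  "path_slope lam x (Suc n) =
    (if digit n x = 1 then path_slope lam x n + 6 * lam * stretch (path_cell lam x n)
     else if digit n x = 2 then 6 * lam * stretch (path_cell lam x n) - path_slope lam x n
     else path_slope lam x n)"
  using digit_cases[of n x]
  by (auto simp: path_slope_def path_cell_Suc path_orient_Suc subcell_def Let_def stretch_def)

lemma path_slope_le_stretch: "path_slope lam x n \<le> stretch (path_cell lam x n)"
  using abs_slope_le_stretch[of "path_cell lam x n"] by (auto simp: path_slope_def)

lemma path_slope_nonneg: "lam > 1/6 \<Longrightarrow> path_slope lam x n \<ge> 0"
proof (induction n)
  case (Suc n)
  have "stretch (path_cell lam x n) \<le> 6 * lam * stretch (path_cell lam x n)"
    using Suc.prems stretch_ge_1[of "path_cell lam x n"] by simp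
  moreover have "0 \<le> 6 * lam * stretch (path_cell lam x n)"
    using Suc.prems stretch_ge_1[of "path_cell lam x n"] by simp
  ultimately show ?case using Suc path_slope_le_stretch[of lam x n] by (simp add: path_slope_Suc)
qed (simp add: path_slope_def path_cell_def unit_cell_def)

lemma stretch_le_1_plus_path_slope: "lam > 1/6 \<Longrightarrow> stretch (path_cell lam x n) \<le> 1 + path_slope lam x n"
proof -
  assume "lam > 1/6"
  then have m: "path_slope lam x n \<ge> 0" by (rule path_slope_nonneg)
  then have "sqrt (1 + (path_slope lam x n)\<^sup>2) \<le> sqrt ((1 + path_slope lam x n)\<^sup>2)"
    by (intro real_sqrt_le_mono) (simp add: power2_eq_square algebra_simps)
  then show ?thesis using m by (simp add: stretch_path_cell)
qed

lemma ln_add_le_of_mult_le: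
  fixes a b c :: real
  assumes "0 < a" "0 < b" "a * b \<le> c"
  shows "ln a + ln b \<le> ln c"
proof -
  have "0 < a * b" using assms by simp
  then have "ln (a * b) \<le> ln c" using assms(3) by simp
  then show ?thesis using assms(1,2) by (simp add: ln_mult)
qed

text \<open>The quantity \<open>stretch + path_slope\<close> grows at least by the factor \<open>6\<lambda> \<plusminus> 1\<close> at digit 1 resp. 2.\<close>

lemma ratio_num_le_ln_stretch_plus_slope:
  assumes "lam > 1/6"
  shows "ratio_num lam x n \<le> ln (stretch (path_cell lam x n) + path_slope lam x n)"
proof (induction n)
  case 0
  then show ?case by (simp add: ratio_num_def beta_def path_slope_def path_cell_def unit_cell_def stretch_def)
next
  case (Suc n)
  let ?s = "stretch (path_cell lam x n)" and ?m = "path_slope lam x n"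
  let ?s' = "stretch (path_cell lam x (Suc n))" and ?m' = "path_slope lam x (Suc n)"
  have m: "0 \<le> ?m" "?m \<le> ?s" "?m' \<le> ?s'"
    using path_slope_nonneg[OF assms] path_slope_le_stretch by auto
  have pos: "?s + ?m > 0" using m stretch_ge_1[of "path_cell lam x n"] by simp
  have step: "digit_growth lam (digit n x) + ln (?s + ?m) \<le> ln (?s' + ?m')"
  proof -
    consider "digit n x = 1" | "digit n x = 2" | "digit n x \<noteq> 1" "digit n x \<noteq> 2" by blast
    then show ?thesis
    proof cases
      case 1
      have "(6 * lam + 1) * (?s + ?m) \<le> ?s' + ?m'"
        using 1 m mult_right_mono[of 0 "6 * lam - 1" "?s - ?m"] assms
        by (simp add: path_slope_Suc algebra_simps)
      then show ?thesis using 1 pos assms by (simp add: digit_growth_def ln_add_le_of_mult_le)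
    next
      case 2
      have "(6 * lam - 1) * (?s + ?m) \<le> ?s' + ?m'"
        using 2 m mult_right_mono[of 0 "6 * lam + 1" "?s - ?m"] assms
        by (simp add: path_slope_Suc algebra_simps)
      then show ?thesis using 2 pos assms by (simp add: digit_growth_def ln_add_le_of_mult_le)
    next
      case 3
      then show ?thesis by (simp add: digit_growth_def path_slope_Suc stretch_path_cell)
    qed
  qed
  show ?case using Suc step by (simp add: ratio_num_Suc)
qed

lemma ratio_num_le_ln_stretch:
  assumes "lam > 1/6"
  shows "ratio_num lam x n \<le> ln 2 + ln (stretch (path_cell lam x n))"
proof -
  have "ratio_num lam x n \<le> ln (stretch (path_cell lam x n) + path_slope lam x n)"
    by (rule ratio_num_le_ln_stretch_plus_slope[OF assms])
  also have "\<dots> \<le> ln (2 * stretch (path_cell lam x n))"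
    using path_slope_le_stretch[of lam x n] path_slope_nonneg[OF assms, of x n] stretch_ge_1[of "path_cell lam x n"]
    by simp
  finally show ?thesis using stretch_ge_1[of "path_cell lam x n"] by (simp add: ln_mult)
qed

text \<open>Conversely, once the slope is large the additive error in the recursion for digit 2
  is absorbed by a factor \<open>exp \<epsilon>\<close>.\<close>

lemma ln_stretch_path_cell_Suc_le:
  assumes lam: "lam > 1/6" and "\<epsilon> > 0"
    and large: "path_slope lam x n \<ge> 2 / ((6 * lam - 1) * (exp \<epsilon> - 1))"
  shows "ln (stretch (path_cell lam x (Suc n)))
    \<le> ln (stretch (path_cell lam x n)) + digit_growth lam (digit n x) + \<epsilon>"
proof -
  let ?s = "stretch (path_cell lam x n)" and ?m = "path_slope lam x n"
  let ?s' = "stretch (path_cell lam x (Suc n))"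
  have s: "?s \<ge> 1" "?s' \<ge> 1" by (rule stretch_ge_1)+
  have f: "6 * lam - 1 > 0" "exp \<epsilon> - 1 > 0" using assms by auto
  consider "digit n x = 1" | "digit n x = 2" | "digit n x \<noteq> 1" "digit n x \<noteq> 2" by blast
  then show ?thesis
  proof cases
    case 1
    have "?s' = sqrt (1 + (?m + 6 * lam * ?s)\<^sup>2)" using 1 by (simp add: stretch_path_cell path_slope_Suc)
    also have "\<dots> \<le> sqrt (1 + ?m\<^sup>2) + \<bar>6 * lam * ?s\<bar>" by (rule sqrt_one_plus_square_add_le)
    also have "\<dots> = (6 * lam + 1) * ?s" using lam s by (simp add: stretch_path_cell algebra_simps)
    finally have "ln ?s' \<le> ln ((6 * lam + 1) * ?s)" using s by simp
    then show ?thesis using 1 s lam assms(2) by (simp add: digit_growth_def ln_mult)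
  next
    case 2
    have "2 = ((6 * lam - 1) * (exp \<epsilon> - 1)) * (2 / ((6 * lam - 1) * (exp \<epsilon> - 1)))"
      using f by simp
    also have "\<dots> \<le> ((6 * lam - 1) * (exp \<epsilon> - 1)) * ?s"
      using large path_slope_le_stretch[of lam x n] f by (intro mult_left_mono) auto
    finally have "2 \<le> (6 * lam - 1) * ?s * (exp \<epsilon> - 1)" by (simp add: mult_ac)
    moreover have "?s' \<le> 1 + (6 * lam * ?s - ?m)"
      using stretch_le_1_plus_path_slope[OF lam, of x "Suc n"] 2 by (simp add: path_slope_Suc)
    moreover have "?s \<le> 1 + ?m" by (rule stretch_le_1_plus_path_slope[OF lam])
    ultimately have "?s' \<le> (6 * lam - 1) * ?s * exp \<epsilon>" by (simp add: algebra_simps)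
    then have "ln ?s' \<le> ln ((6 * lam - 1) * ?s * exp \<epsilon>)" using s by simp
    then show ?thesis using 2 s f by (simp add: digit_growth_def ln_mult)
  next
    case 3
    then show ?thesis using assms(2) by (simp add: digit_growth_def stretch_path_cell path_slope_Suc)
  qed
qed

lemma bdd_above_range_if_eventually_le:
  fixes f :: "nat \<Rightarrow> real"
  assumes "eventually (\<lambda>n. f n \<le> C) sequentially"
  shows "bdd_above (range f)"
proof -
  obtain N where N: "\<And>n. n \<ge> N \<Longrightarrow> f n \<le> C" using assms by (auto simp: eventually_sequentially)
  have "{..<N} \<union> {N..} = UNIV" by auto
  then have "range f = f ` {..<N} \<union> f ` {N..}" by (metis image_Un)
  moreover have "bdd_above (f ` {N..})" using N by (intro bdd_aboveI[of _ C]) auto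
  ultimately show ?thesis by (simp add: bdd_above_finite)
qed

lemma ln_stretch_le_ratio_num:
  assumes lam: "lam > 1/6" and slope: "filterlim (path_slope lam x) at_top sequentially" and "\<epsilon> > 0"
  obtains C where "\<And>n. ln (stretch (path_cell lam x n)) \<le> ratio_num lam x n + \<epsilon> * real n + C"
proof -
  define g where "g n = ln (stretch (path_cell lam x n)) - ratio_num lam x n - \<epsilon> * real n" for n
  obtain n0 where n0: "\<And>n. n \<ge> n0 \<Longrightarrow> path_slope lam x n \<ge> 2 / ((6 * lam - 1) * (exp \<epsilon> - 1))"
    using slope by (auto simp: filterlim_at_top eventually_sequentially)
  have "g n \<le> g n0" if "n \<ge> n0" for n
    using that
  proof (induction n rule: dec_induct)
    case (step n)
    then show ?case
      using ln_stretch_path_cell_Suc_le[OF lam \<open>\<epsilon> > 0\<close> n0[of n]] by (simp add: g_def ratio_num_Suc algebra_simps)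
  qed simp
  then have "bdd_above (range g)"
    by (intro bdd_above_range_if_eventually_le) (auto simp: eventually_sequentially)
  then obtain C where "\<And>n. g n \<le> C" by (auto simp: bdd_above_def)
  then show ?thesis by (intro that[of C]) (simp add: g_def algebra_simps)
qed

lemma ratio_le:
  assumes "lam > 1/6"
  shows "ratio lam x n \<le> ln (6 * lam + 1) / ln 6"
proof (cases "n = 0")
  case True
  then show ?thesis using assms by (simp add: ratio_eq ratio_den_def beta_def)
next
  case False
  have "ratio_num lam x n \<le> real (beta 1 x n + beta 2 x n) * ln (6 * lam + 1)"
    using mult_left_mono[of "ln (6 * lam - 1)" "ln (6 * lam + 1)" "real (beta 2 x n)"] assms
    by (simp add: ratio_num_def algebra_simps)
  also have "\<dots> = (ln (6 * lam + 1) / ln 6) * (real (beta 1 x n + beta 2 x n) * ln 6)" by simp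
  also have "\<dots> \<le> (ln (6 * lam + 1) / ln 6) * ratio_den x n"
    unfolding ratio_den_def using assms by (intro mult_left_mono) auto
  finally show ?thesis using ratio_den_pos[of n x] False by (simp add: ratio_eq divide_simps)
qed

section \<open>Hoelder regularity and the stretch of the path cells\<close>

lemma poly_second_difference_le:
  fixes P :: "real poly"
  obtains M where "M \<ge> 0"
    and "\<And>w h. \<bar>w\<bar> \<le> 1 \<Longrightarrow> 0 \<le> h \<Longrightarrow> h \<le> 1 \<Longrightarrow> \<bar>poly P (w + h) + poly P (w - h) - 2 * poly P w\<bar> \<le> M * h\<^sup>2"
proof -
  let ?P'' = "pderiv (pderiv P)"
  have "bounded (poly ?P'' ` {-2..2})"
    by (intro compact_imp_bounded compact_continuous_image continuous_intros) auto
  then obtain M where M: "M \<ge> 0" "\<And>u. \<bar>u\<bar> \<le> 2 \<Longrightarrow> \<bar>poly ?P'' u\<bar> \<le> M"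
    by (auto simp: bounded_pos abs_le_iff) (metis atLeastAtMost_iff less_imp_le minus_le_iff)
  have "\<bar>poly P (w + h) + poly P (w - h) - 2 * poly P w\<bar> \<le> (2 * M) * h\<^sup>2"
    if w: "\<bar>w\<bar> \<le> 1" and h: "0 < h" "h \<le> 1" for w h
  proof -
    define psi where "psi t = poly P (w + t) + poly P (w - t) - 2 * poly P w" for t
    have "DERIV psi t :> poly (pderiv P) (w + t) - poly (pderiv P) (w - t)" for t
      unfolding psi_def by (auto intro!: derivative_eq_intros DERIV_chain2[OF poly_DERIV])
    then obtain z where z: "0 < z" "z < h"
      and psi: "psi h - psi 0 = h * (poly (pderiv P) (w + z) - poly (pderiv P) (w - z))"
      using MVT2[OF h(1), of psi "\<lambda>t. poly (pderiv P) (w + t) - poly (pderiv P) (w - t)"] by auto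
    obtain y where y: "w - z < y" "y < w + z"
      and "poly (pderiv P) (w + z) - poly (pderiv P) (w - z) = 2 * z * poly ?P'' y"
      using MVT2[of "w - z" "w + z" "poly (pderiv P)" "poly ?P''"] z by auto
    then have "\<bar>psi h\<bar> = h * (2 * z) * \<bar>poly ?P'' y\<bar>"
      using z psi h by (simp add: psi_def abs_mult)
    also have "\<dots> \<le> h * (2 * h) * M"
      using M(2)[of y] y w z h M(1) by (intro mult_mono) auto
    finally show ?thesis by (simp add: psi_def power2_eq_square mult_ac)
  qed
  then show ?thesis
    using M(1) by (intro that[of "2 * M"]) (auto simp: order_le_less)
qed

lemma Flam_second_difference:
  assumes lam: "0 < lam" "lam < 5/6" and c: "c \<in> descendants lam n unit_cell"
  shows "Flam lam (cell_left c) + Flam lam (cell_left c + cell_len c) - 2 * Flam lam (cell_left c + cell_len c / 2)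
    = - 2 * lam * cell_len c * stretch c"
proof -
  have "Flam lam (cell_left (subcell lam 2 c)) = cell_val (subcell lam 2 c)"
    by (rule Flam_left_end(1)[OF lam subcell_in_descendants[OF c]])
  then have "Flam lam (cell_left c + cell_len c / 2)
      = cell_val c + cell_slope c * cell_len c / 2 + lam * cell_len c * stretch c"
    by (simp add: subcell_def Let_def stretch_def)
  then show ?thesis using Flam_left_end(1)[OF lam c] Flam_right_end(1)[OF lam c]
    by (simp add: algebra_simps)
qed

lemma second_difference_le_hoelder:
  assumes lam: "0 < lam" "lam < 5/6" and c: "c \<in> descendants lam n unit_cell" "in_cell c x"
    and small: "cell_len c < \<delta>" "cell_len c \<le> 1" and C: "C \<ge> 0" and \<alpha>: "\<alpha> \<ge> 0"
    and H: "\<And>y. \<bar>y - x\<bar> < \<delta> \<Longrightarrow> \<bar>Flam lam y - poly P (y - x)\<bar> \<le> C * \<bar>y - x\<bar> powr \<alpha>"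
    and "M \<ge> 0"
    and M: "\<And>w h. \<bar>w\<bar> \<le> 1 \<Longrightarrow> 0 \<le> h \<Longrightarrow> h \<le> 1 \<Longrightarrow> \<bar>poly P (w + h) + poly P (w - h) - 2 * poly P w\<bar> \<le> M * h\<^sup>2"
  shows "2 * lam * cell_len c * stretch c \<le> 4 * C * cell_len c powr \<alpha> + M * (cell_len c)\<^sup>2"
proof -
  let ?a = "cell_left c" and ?l = "cell_len c" and ?F = "Flam lam"
  define g where "g t = poly P (t - x)" for t
  have l: "?l > 0" using unit_cell_descendant(1)[OF lam(1) c(1)] .
  have x: "?a \<le> x" "x \<le> ?a + ?l" using c(2) by (auto simp: in_cell_def)
  have approx: "\<bar>?F t - g t\<bar> \<le> C * ?l powr \<alpha>" if "?a \<le> t" "t \<le> ?a + ?l" for t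
  proof -
    have d: "\<bar>t - x\<bar> \<le> ?l" using that x by auto
    have "\<bar>?F t - g t\<bar> \<le> C * \<bar>t - x\<bar> powr \<alpha>" using H[of t] d small by (simp add: g_def)
    also have "\<dots> \<le> C * ?l powr \<alpha>" using d C \<alpha> by (intro mult_left_mono powr_mono2) auto
    finally show ?thesis .
  qed
  have "\<bar>g (?a + ?l) + g ?a - 2 * g (?a + ?l / 2)\<bar> \<le> M * (?l / 2)\<^sup>2"
    using M[of "?a + ?l / 2 - x" "?l / 2"] x small l by (simp add: g_def algebra_simps)
  also have "\<dots> \<le> M * ?l\<^sup>2" using \<open>M \<ge> 0\<close> l by (intro mult_left_mono) (auto simp: power2_eq_square)
  finally have "\<bar>g (?a + ?l) + g ?a - 2 * g (?a + ?l / 2)\<bar> \<le> M * ?l\<^sup>2" .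
  then show ?thesis
    using Flam_second_difference[OF lam c(1)] approx[of ?a] approx[of "?a + ?l"] approx[of "?a + ?l / 2"] l
    unfolding abs_le_iff by (simp add: algebra_simps)
qed

lemma cell_len_path_cell_tendsto_0: "(\<lambda>n. cell_len (path_cell lam x n)) \<longlonglongrightarrow> 0"
proof (rule Lim_null_comparison[OF _ LIMSEQ_realpow_zero[of "1/3"]])
  have "cell_len (path_cell lam x n) \<le> (1/3) ^ n" for n
  proof -
    have "cell_len (path_cell lam x n) \<le> exp (- (real n * ln 3))"
      using ratio_den_ge[of n x] by (simp add: cell_len_path_cell)
    also have "\<dots> = (1/3) ^ n"
      by (simp add: exp_minus exp_of_nat_mult power_divide inverse_eq_divide)
    finally show ?thesis .
  qed
  then show "\<forall>\<^sub>F n in sequentially. norm (cell_len (path_cell lam x n)) \<le> (1/3) ^ n"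
    by (simp add: cell_len_path_cell)
qed auto

lemma pointwise_hoelder_imp_second_difference_bound:
  assumes lam: "0 < lam" "lam < 5/6" and "x \<in> {0..1}" "\<alpha> \<ge> 0" "pointwise_hoelder (Flam lam) x \<alpha>"
  obtains C M where "C \<ge> 0" "M \<ge> 0"
    "\<forall>\<^sub>F n in sequentially. 2 * lam * stretch (path_cell lam x n)
       \<le> 4 * C * cell_len (path_cell lam x n) powr (\<alpha> - 1) + M * cell_len (path_cell lam x n)"
proof -
  obtain P C0 \<delta> where "\<delta> > 0"
    and H0: "\<And>y. \<bar>y - x\<bar> < \<delta> \<Longrightarrow> \<bar>Flam lam y - poly P (y - x)\<bar> \<le> C0 * \<bar>y - x\<bar> powr \<alpha>"
    using assms(5) unfolding pointwise_hoelder_def by blast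
  define C where "C = max C0 0"
  have H: "\<bar>Flam lam y - poly P (y - x)\<bar> \<le> C * \<bar>y - x\<bar> powr \<alpha>" if "\<bar>y - x\<bar> < \<delta>" for y
    using H0[OF that] mult_right_mono[of C0 C "\<bar>y - x\<bar> powr \<alpha>"] by (simp add: C_def)
  obtain M where M: "M \<ge> 0" "\<And>w h. \<bar>w\<bar> \<le> 1 \<Longrightarrow> 0 \<le> h \<Longrightarrow> h \<le> 1 \<Longrightarrow>
      \<bar>poly P (w + h) + poly P (w - h) - 2 * poly P w\<bar> \<le> M * h\<^sup>2"
    using poly_second_difference_le by blast
  have "\<forall>\<^sub>F n in sequentially. cell_len (path_cell lam x n) < min \<delta> 1"
    using cell_len_path_cell_tendsto_0 \<open>\<delta> > 0\<close> by (intro order_tendstoD) auto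
  then have "\<forall>\<^sub>F n in sequentially. 2 * lam * stretch (path_cell lam x n)
      \<le> 4 * C * cell_len (path_cell lam x n) powr (\<alpha> - 1) + M * cell_len (path_cell lam x n)"
  proof eventually_elim
    case (elim n)
    let ?c = "path_cell lam x n"
    have c: "?c \<in> descendants lam n unit_cell" "in_cell ?c x" "cell_len ?c > 0"
      using path_cell_props[OF assms(3) lam(1)] unit_cell_descendant(1)[OF lam(1)] by blast+
    have small: "cell_len ?c < \<delta>" "cell_len ?c \<le> 1" using elim by auto
    have "cell_len ?c * (2 * lam * stretch ?c) \<le> 4 * C * cell_len ?c powr \<alpha> + M * (cell_len ?c)\<^sup>2"
      using second_difference_le_hoelder[OF lam c(1,2) small _ assms(4) H M(1) M(2)]
      by (simp add: C_def mult_ac)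
    also have "\<dots> = cell_len ?c * (4 * C * cell_len ?c powr (\<alpha> - 1) + M * cell_len ?c)"
      using powr_mult_base[of "cell_len ?c" "\<alpha> - 1"] c(3) by (simp add: algebra_simps power2_eq_square)
    finally show ?case using c(3) by simp
  qed
  then show ?thesis using M(1) by (intro that[of C M]) (auto simp: C_def)
qed

lemma pointwise_hoelder_le_1:
  assumes lam: "0 < lam" "lam < 5/6" and "x \<in> {0..1}" "\<alpha> \<ge> 0" "pointwise_hoelder (Flam lam) x \<alpha>"
  shows "\<alpha> \<le> 1"
proof (rule ccontr)
  assume "\<not> \<alpha> \<le> 1"
  let ?l = "\<lambda>n. cell_len (path_cell lam x n)"
  obtain C M where bound: "\<forall>\<^sub>F n in sequentially. 2 * lam * stretch (path_cell lam x n) \<le> 4 * C * ?l n powr (\<alpha> - 1) + M * ?l n"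
    using pointwise_hoelder_imp_second_difference_bound[OF assms] by blast
  have "\<forall>\<^sub>F n in sequentially. 0 \<le> ?l n" using cell_len_path_cell_pos by (simp add: less_imp_le)
  then have "(\<lambda>n. ?l n powr (\<alpha> - 1)) \<longlonglongrightarrow> 0"
    using \<open>\<not> \<alpha> \<le> 1\<close> by (intro tendsto_zero_powrI[OF cell_len_path_cell_tendsto_0 tendsto_const]) auto
  then have "(\<lambda>n. 4 * C * ?l n powr (\<alpha> - 1) + M * ?l n) \<longlonglongrightarrow> 0"
    using cell_len_path_cell_tendsto_0 by (intro tendsto_add_zero tendsto_mult_right_zero)
  then have "\<forall>\<^sub>F n in sequentially. 4 * C * ?l n powr (\<alpha> - 1) + M * ?l n < 2 * lam"
    using lam by (intro order_tendstoD) auto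
  with bound have "\<forall>\<^sub>F n in sequentially. False"
  proof eventually_elim
    case (elim n)
    then show ?case using stretch_ge_1[of "path_cell lam x n"] lam by (smt (verit) mult_le_cancel_left1)
  qed
  then show False by simp
qed

lemma stretch_bound_of_pointwise_hoelder:
  assumes lam: "0 < lam" "lam < 5/6" and "x \<in> {0..1}" "\<alpha> \<ge> 0" "pointwise_hoelder (Flam lam) x \<alpha>"
  obtains K where "K > 0"
    "\<forall>\<^sub>F n in sequentially. stretch (path_cell lam x n) \<le> K * cell_len (path_cell lam x n) powr (\<alpha> - 1)"
proof -
  let ?l = "\<lambda>n. cell_len (path_cell lam x n)"
  obtain C M where CM: "C \<ge> 0" "M \<ge> 0"
    and bound: "\<forall>\<^sub>F n in sequentially. 2 * lam * stretch (path_cell lam x n) \<le> 4 * C * ?l n powr (\<alpha> - 1) + M * ?l n"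
    using pointwise_hoelder_imp_second_difference_bound[OF assms] by blast
  define K where "K = (4 * C + M) / (2 * lam) + 1"
  have "\<forall>\<^sub>F n in sequentially. ?l n < 1"
    using cell_len_path_cell_tendsto_0 by (intro order_tendstoD) auto
  with bound have ev: "\<forall>\<^sub>F n in sequentially. stretch (path_cell lam x n) \<le> K * ?l n powr (\<alpha> - 1)"
  proof eventually_elim
    case (elim n)
    then have small: "?l n < 1"
      and bound_n: "2 * lam * stretch (path_cell lam x n) \<le> 4 * C * ?l n powr (\<alpha> - 1) + M * ?l n"
      by blast+
    have l: "?l n > 0" by (rule cell_len_path_cell_pos)
    have "?l n \<le> ?l n powr 0" using l small by simp
    also have "\<dots> \<le> ?l n powr (\<alpha> - 1)"
      by (rule powr_mono') (use pointwise_hoelder_le_1[OF assms] small l in auto)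
    finally have "2 * lam * stretch (path_cell lam x n) \<le> (4 * C + M) * ?l n powr (\<alpha> - 1)"
      using bound_n CM mult_left_mono[of "?l n" "?l n powr (\<alpha> - 1)" M] by (simp add: algebra_simps)
    then have "stretch (path_cell lam x n) \<le> (4 * C + M) / (2 * lam) * ?l n powr (\<alpha> - 1)"
      using lam by (simp add: field_simps)
    also have "\<dots> \<le> K * ?l n powr (\<alpha> - 1)" by (intro mult_right_mono) (auto simp: K_def)
    finally show ?case .
  qed
  have "(4 * C + M) / (2 * lam) \<ge> 0" using CM lam by simp
  then have "K > 0" by (simp add: K_def)
  with ev show ?thesis using that by blast
qed

lemma Flam_increment_le_path_stretch:
  assumes lam: "0 < lam" "lam < 5/6" and "x \<in> {0..1}" "y \<in> {0..1}" "y \<noteq> x"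
  obtains p where "\<bar>Flam lam y - Flam lam x\<bar> \<le> increment_const lam * stretch (path_cell lam x p) * \<bar>y - x\<bar>"
    and "\<bar>y - x\<bar> \<le> cell_len (path_cell lam x p)"
proof -
  let ?c = "path_cell lam x"
  note props = path_cell_props[OF assms(3) lam(1)]
  have "\<forall>\<^sub>F n in sequentially. cell_len (?c n) < \<bar>y - x\<bar>"
    using cell_len_path_cell_tendsto_0 assms(5) by (intro order_tendstoD) auto
  then obtain n where "cell_len (?c n) < \<bar>y - x\<bar>" by (auto simp: eventually_sequentially)
  then have "\<not> in_cell (?c n) y" using props[of n] by (auto simp: in_cell_def)
  moreover have "in_cell (?c 0) y" using assms(4) by (simp add: path_cell_def unit_cell_def in_cell_def)
  ultimately obtain p where p: "in_cell (?c p) y" "\<not> in_cell (?c (Suc p)) y"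
    using exists_least_lemma[of "\<lambda>n. \<not> in_cell (?c n) y"] by auto
  define i where "i = (if path_orient lam x p then digit p x else 3 - digit p x)"
  have i: "i \<le> 3" "?c (Suc p) = subcell lam i (?c p)"
    using digit_cases[of p x] by (auto simp: i_def path_cell_Suc)
  obtain j where j: "j \<le> 3" "in_cell (subcell lam j (?c p)) y" using subcell_cover[OF p(1)] by blast
  have x: "in_cell (subcell lam i (?c p)) x" using props[of "Suc p"] i by simp
  have C: "increment_const lam * stretch (?c p) \<ge> 0"
    using increment_const_pos[OF lam] stretch_ge_1[of "?c p"] by simp
  have "i \<noteq> j" using p(2) i j by auto
  then consider "i < j" | "j < i" by linarith
  then have "\<bar>Flam lam y - Flam lam x\<bar> \<le> increment_const lam * stretch (?c p) * \<bar>y - x\<bar>"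
  proof cases
    case 1
    then show ?thesis using Flam_increment_subcells[OF lam _ 1 j(1) x j(2)] props[of p] C
      by (smt (verit) mult_left_mono)
  next
    case 2
    then show ?thesis using Flam_increment_subcells[OF lam _ 2 i(1) j(2) x] props[of p] C
      by (smt (verit) mult_left_mono)
  qed
  moreover have "\<bar>y - x\<bar> \<le> cell_len (?c p)" using p(1) props[of p] by (auto simp: in_cell_def)
  ultimately show ?thesis using that by blast
qed

lemma pointwise_hoelder_of_stretch_bound:
  assumes lam: "0 < lam" "lam < 5/6" and x: "x \<in> {0..1}" "x \<notin> Eset"
    and \<alpha>: "0 \<le> \<alpha>" "\<alpha> < 1" and "K > 0"
    and K: "\<And>n. stretch (path_cell lam x n) \<le> K * cell_len (path_cell lam x n) powr (\<alpha> - 1)"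
  shows "pointwise_hoelder (Flam lam) x \<alpha>"
proof -
  have "0 < x" "x < 1" using path_cell_interior[OF x lam(1), of 0] by (simp_all add: path_cell_def unit_cell_def)
  define \<delta> where "\<delta> = min x (1 - x)"
  have "\<bar>Flam lam y - Flam lam x\<bar> \<le> increment_const lam * K * \<bar>y - x\<bar> powr \<alpha>" if "\<bar>y - x\<bar> < \<delta>" for y
  proof (cases "y = x")
    case False
    have "y \<in> {0..1}" using that by (auto simp: \<delta>_def)
    then obtain p where
      incr: "\<bar>Flam lam y - Flam lam x\<bar> \<le> increment_const lam * stretch (path_cell lam x p) * \<bar>y - x\<bar>"
      and dist: "\<bar>y - x\<bar> \<le> cell_len (path_cell lam x p)"
      using Flam_increment_le_path_stretch[OF lam x(1) _ False] by blast
    have "stretch (path_cell lam x p) \<le> K * \<bar>y - x\<bar> powr (\<alpha> - 1)"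
      using K[of p] powr_mono2'[of "\<alpha> - 1" "\<bar>y - x\<bar>" "cell_len (path_cell lam x p)"] \<alpha> False dist \<open>K > 0\<close>
      by (smt (verit) mult_left_mono)
    then have "\<bar>Flam lam y - Flam lam x\<bar> \<le> increment_const lam * (K * \<bar>y - x\<bar> powr (\<alpha> - 1)) * \<bar>y - x\<bar>"
      using incr increment_const_pos[OF lam] by (smt (verit) abs_ge_zero mult_left_mono mult_right_mono)
    also have "\<dots> = increment_const lam * K * \<bar>y - x\<bar> powr \<alpha>"
      using powr_mult_base[of "\<bar>y - x\<bar>" "\<alpha> - 1"] by (simp add: mult_ac)
    finally show ?thesis .
  qed simp
  then show ?thesis unfolding pointwise_hoelder_def
    by (intro exI[of _ "[:Flam lam x:]"] exI[of _ "increment_const lam * K"] exI[of _ \<delta>])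
       (auto simp: \<delta>_def \<open>0 < x\<close> \<open>x < 1\<close>)
qed

section \<open>The exponent as a limit superior\<close>

lemma ratio_den_at_top: "filterlim (ratio_den x) at_top sequentially"
proof (rule filterlim_at_top_mono)
  show "LIM n sequentially. ln 3 * real n :> at_top"
    by (rule filterlim_tendsto_pos_mult_at_top[OF tendsto_const _ filterlim_real_sequentially]) simp
  show "\<forall>\<^sub>F n in sequentially. ln 3 * real n \<le> ratio_den x n"
    using ratio_den_ge by (simp add: mult.commute)
qed

lemma cell_len_path_cell_powr: "cell_len (path_cell lam x n) powr b = exp (- b * ratio_den x n)"
  using cell_len_path_cell_pos[of lam x n] by (simp add: powr_def cell_len_path_cell)

lemma limsup_ratio_le_of_stretch_bound:
  assumes lam: "lam > 1/6" and "K > 0"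
    and bound: "\<forall>\<^sub>F n in sequentially. stretch (path_cell lam x n) \<le> K * cell_len (path_cell lam x n) powr (\<alpha> - 1)"
  shows "limsup (\<lambda>n. ereal (ratio lam x n)) \<le> ereal (1 - \<alpha>)"
proof (rule ereal_le_epsilon2)
  fix e :: real assume "e > 0"
  let ?c = "ln K + ln 2"
  have "\<forall>\<^sub>F n in sequentially. ?c / e \<le> ratio_den x n" using ratio_den_at_top by (simp add: filterlim_at_top)
  with bound eventually_gt_at_top[of 0]
  have "\<forall>\<^sub>F n in sequentially. ereal (ratio lam x n) \<le> ereal (1 - \<alpha>) + ereal e"
  proof eventually_elim
    case (elim n)
    have den: "ratio_den x n > 0" using ratio_den_pos elim by blast
    have "ln (stretch (path_cell lam x n)) \<le> ln (K * cell_len (path_cell lam x n) powr (\<alpha> - 1))"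
      using elim stretch_ge_1[of "path_cell lam x n"] by simp
    also have "\<dots> = ln K + (1 - \<alpha>) * ratio_den x n"
      using \<open>K > 0\<close> by (simp add: cell_len_path_cell_powr ln_mult algebra_simps)
    finally have "ratio_num lam x n \<le> (1 - \<alpha>) * ratio_den x n + ?c"
      using ratio_num_le_ln_stretch[OF lam, of x n] by simp
    also have "\<dots> \<le> (1 - \<alpha> + e) * ratio_den x n"
      using elim \<open>e > 0\<close> by (simp add: field_simps)
    finally show ?case using den by (simp add: ratio_eq divide_simps)
  qed
  then show "limsup (\<lambda>n. ereal (ratio lam x n)) \<le> ereal (1 - \<alpha>) + ereal e"
    by (rule Limsup_bounded)
qed

lemma stretch_bound_of_limsup_ratio_less:
  assumes lam: "lam > 1/6" and slope: "filterlim (path_slope lam x) at_top sequentially"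
    and limsup: "limsup (\<lambda>n. ereal (ratio lam x n)) < ereal (1 - \<alpha>)"
  obtains K where "K > 0" "\<And>n. stretch (path_cell lam x n) \<le> K * cell_len (path_cell lam x n) powr (\<alpha> - 1)"
proof -
  obtain q where q: "limsup (\<lambda>n. ereal (ratio lam x n)) < ereal q" "q < 1 - \<alpha>"
    using ereal_dense2[OF limsup] by auto
  define \<epsilon> where "\<epsilon> = 1 - \<alpha> - q"
  have "\<epsilon> > 0" using q by (simp add: \<epsilon>_def)
  then obtain C where C: "\<And>n. ln (stretch (path_cell lam x n)) \<le> ratio_num lam x n + (\<epsilon> * ln 3) * real n + C"
    using ln_stretch_le_ratio_num[OF lam slope, of "\<epsilon> * ln 3"] by auto
  have "\<forall>\<^sub>F n in sequentially. ereal (ratio lam x n) < ereal q"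
    using q(1) by (rule Limsup_lessD)
  with eventually_gt_at_top[of 0]
  have "\<forall>\<^sub>F n in sequentially. ln (stretch (path_cell lam x n)) - (1 - \<alpha>) * ratio_den x n \<le> C"
  proof eventually_elim
    case (elim n)
    have den: "ratio_den x n > 0" using ratio_den_pos elim by blast
    then have "ratio_num lam x n < q * ratio_den x n" using elim by (simp add: ratio_eq divide_simps)
    moreover have "(\<epsilon> * ln 3) * real n \<le> \<epsilon> * ratio_den x n"
      using ratio_den_ge[of n x] \<open>\<epsilon> > 0\<close> by (simp add: mult_left_mono mult.assoc mult.commute[of "ln 3"])
    ultimately show ?case using C[of n] by (simp add: \<epsilon>_def algebra_simps)
  qed
  then have "bdd_above (range (\<lambda>n. ln (stretch (path_cell lam x n)) - (1 - \<alpha>) * ratio_den x n))"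
    by (rule bdd_above_range_if_eventually_le)
  then obtain C' where C': "\<And>n. ln (stretch (path_cell lam x n)) - (1 - \<alpha>) * ratio_den x n \<le> C'"
    by (auto simp: bdd_above_def)
  have "stretch (path_cell lam x n) \<le> exp C' * cell_len (path_cell lam x n) powr (\<alpha> - 1)" for n
  proof -
    have "stretch (path_cell lam x n) = exp (ln (stretch (path_cell lam x n)))"
      using stretch_ge_1[of "path_cell lam x n"] by simp
    also have "\<dots> \<le> exp (C' + (1 - \<alpha>) * ratio_den x n)" using C'[of n] by simp
    also have "\<dots> = exp C' * cell_len (path_cell lam x n) powr (\<alpha> - 1)"
      by (simp add: cell_len_path_cell_powr exp_add[symmetric] algebra_simps)
    finally show ?thesis .
  qed
  then show ?thesis by (intro that[of "exp C'"]) auto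
qed

lemma hoelder_exponent_le:
  assumes "\<And>\<alpha>. \<alpha> \<ge> 0 \<Longrightarrow> pointwise_hoelder f x \<alpha> \<Longrightarrow> \<alpha> \<le> b"
  shows "hoelder_exponent f x \<le> ereal b"
  using assms by (auto simp: hoelder_exponent_def intro!: Sup_least)

lemma hoelder_exponent_ge:
  assumes "b > 0" and "\<And>\<alpha>. 0 \<le> \<alpha> \<Longrightarrow> \<alpha> < b \<Longrightarrow> pointwise_hoelder f x \<alpha>"
  shows "ereal b \<le> hoelder_exponent f x"
proof (rule dense_le_bounded[of 0])
  fix w assume w: "0 < w" "w < ereal b"
  then obtain \<alpha> where "w = ereal \<alpha>" by (cases w) auto
  then show "w \<le> hoelder_exponent f x"
    using w assms(2)[of \<alpha>] unfolding hoelder_exponent_def by (intro Sup_upper) auto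
qed (use assms(1) in simp)

lemma limsup_ratio_max_0:
  assumes "1/6 < lam" "lam < 5/6"
  obtains r where "max (limsup (\<lambda>n. ereal (ratio lam x n))) 0 = ereal r" "0 \<le> r" "r < 1"
proof -
  let ?L = "limsup (\<lambda>n. ereal (ratio lam x n))"
  have "?L \<le> ereal (ln (6 * lam + 1) / ln 6)"
    using ratio_le[OF assms(1)] by (intro Limsup_bounded) auto
  also have "ln (6 * lam + 1) / ln 6 < 1" using assms by simp
  finally have bounds: "0 \<le> max ?L 0" "max ?L 0 < ereal 1" by auto
  then obtain r where "max ?L 0 = ereal r" by (cases "max ?L 0") auto
  with bounds show ?thesis using that by auto
qed

lemma limsup_ratio_le_of_pointwise_hoelder:
  assumes lam: "1/6 < lam" "lam < 5/6" and "x \<in> {0..1}" "\<alpha> \<ge> 0" "pointwise_hoelder (Flam lam) x \<alpha>"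
  shows "max (limsup (\<lambda>n. ereal (ratio lam x n))) 0 \<le> ereal (1 - \<alpha>)"
proof -
  have lam': "0 < lam" "lam < 5/6" using lam by auto
  obtain K where "K > 0"
    "\<forall>\<^sub>F n in sequentially. stretch (path_cell lam x n) \<le> K * cell_len (path_cell lam x n) powr (\<alpha> - 1)"
    using stretch_bound_of_pointwise_hoelder[OF lam' assms(3-5)] by blast
  then have "limsup (\<lambda>n. ereal (ratio lam x n)) \<le> ereal (1 - \<alpha>)"
    by (rule limsup_ratio_le_of_stretch_bound[OF lam(1)])
  moreover have "0 \<le> ereal (1 - \<alpha>)" using pointwise_hoelder_le_1[OF lam' assms(3-5)] by simp
  ultimately show ?thesis by (rule max.boundedI)
qed

lemma path_slope_tendsto_at_top:
  assumes "1/6 < lam" "x \<in> Iset lam"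
  shows "filterlim (path_slope lam x) at_top sequentially"
proof -
  have x: "x \<in> {0..1}" "x \<notin> Eset" using assms(2) by (auto simp: Iset_def)
  have "\<bar>slope lam n x\<bar> = path_slope lam x n" for n
    using slope_eq_path_cell[OF x, of lam n] path_slope_nonneg[OF assms(1), of x n] assms(1)
    by (simp add: path_slope_def split: if_splits)
  then show ?thesis using assms(2) by (simp add: Iset_def)
qed

lemma pointwise_hoelder_of_limsup_ratio_less:
  assumes lam: "1/6 < lam" "lam < 5/6" and x: "x \<in> Iset lam" and \<alpha>: "0 \<le> \<alpha>" "\<alpha> < 1"
    and limsup: "limsup (\<lambda>n. ereal (ratio lam x n)) < ereal (1 - \<alpha>)"
  shows "pointwise_hoelder (Flam lam) x \<alpha>"
proof -
  obtain K where "K > 0" "\<And>n. stretch (path_cell lam x n) \<le> K * cell_len (path_cell lam x n) powr (\<alpha> - 1)"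
    using stretch_bound_of_limsup_ratio_less[OF lam(1) path_slope_tendsto_at_top[OF lam(1) x] limsup] by blast
  moreover have "0 < lam" "x \<in> {0..1}" "x \<notin> Eset" using lam x by (auto simp: Iset_def)
  ultimately show ?thesis using pointwise_hoelder_of_stretch_bound lam(2) \<alpha> by blast
qed

theorem proposition3p14:
  fixes lam x :: real
  assumes "1/6 < lam" and "lam < 5/6"
    and "x \<in> {0..1}" and "x \<notin> Eset"
  shows "hoelder_exponent (Flam lam) x \<le> 1 - max (limsup (\<lambda>n. ereal (ratio lam x n))) 0
         \<and> (x \<in> Iset lam \<longrightarrow>
           hoelder_exponent (Flam lam) x = 1 - max (limsup (\<lambda>n. ereal (ratio lam x n))) 0)"
proof -
  define L where "L = limsup (\<lambda>n. ereal (ratio lam x n))"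
  obtain r where r: "max L 0 = ereal r" "0 \<le> r" "r < 1"
    using limsup_ratio_max_0[OF assms(1,2)] unfolding L_def by blast
  have upper: "hoelder_exponent (Flam lam) x \<le> ereal (1 - r)"
  proof (rule hoelder_exponent_le)
    fix \<alpha> assume "\<alpha> \<ge> 0" "pointwise_hoelder (Flam lam) x \<alpha>"
    then show "\<alpha> \<le> 1 - r"
      using limsup_ratio_le_of_pointwise_hoelder[OF assms(1-3)] r(1) unfolding L_def by fastforce
  qed
  have lower: "ereal (1 - r) \<le> hoelder_exponent (Flam lam) x" if x_I: "x \<in> Iset lam"
  proof (rule hoelder_exponent_ge)
    fix \<alpha> assume \<alpha>: "0 \<le> \<alpha>" "\<alpha> < 1 - r"
    have "L \<le> ereal r" unfolding r(1)[symmetric] by (rule max.cobounded1)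
    also have "\<dots> < ereal (1 - \<alpha>)" using \<alpha> by simp
    finally show "pointwise_hoelder (Flam lam) x \<alpha>"
      using pointwise_hoelder_of_limsup_ratio_less[OF assms(1,2) x_I] \<alpha> r(2) unfolding L_def by simp
  qed (use r in simp)
  have "1 - max L 0 = ereal (1 - r)" using r(1) by (simp add: one_ereal_def)
  then show ?thesis using upper lower unfolding L_def[symmetric] by auto
qed

end
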